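(* The functionals $(\eta,v)\mapsto\mathrm{KL}^U_{\inf}(\eta,v)$ and $(\eta,v)\mapsto\mathrm{KL}^L_{\inf}(\eta,v)$, on $\mathcal{P}(\mathbb{R})\times D$ (weak topology on $\mathcal{P}(\mathbb{R})$), are jointly lower-semicontinuous.
   Context: $\pi\in(0,1)$, $\epsilon>0$, $B>0$. $\mathcal{L}=\{\eta\in\mathcal{P}(\mathbb{R}):\mathbb{E}_\eta|X|^{1+\epsilon}\le B\}$. $F_\eta(x)=\eta((-\infty,x])$, $x_\pi(\eta)=\min\{z:F_\eta(z)\ge\pi\}$, $c_\pi(\eta)=\frac{F_\eta(x_\pi(\eta))-\pi}{1-\pi}x_\pi(\eta)+\frac{1}{1-\pi}\int_{(x_\pi(\eta),\infty)}y\,dF_\eta(y)$. $D=[-B^{1/(1+\epsilon)},B^{1/(1+\epsilon)}(1-\pi)^{-1/(1+\epsilon)}]$. $\mathrm{KL}(\eta,\kappa)=\int\log\frac{d\eta}{d\kappa}d\eta$ if $\eta\ll\kappa$, else $+\infty$. $\mathrm{KL}^U_{\inf}(\eta,x)=\inf\{\mathrm{KL}(\eta,\kappa):\kappa\in\mathcal{L},c_\pi(\kappa)\ge x\}$, $\mathrm{KL}^L_{\inf}(\eta,x)=\inf\{\mathrm{KL}(\eta,\kappa):\kappa\in\mathcal{L},c_\pi(\kappa)\le x\}$. *)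

theory Defs
  imports "HOL-Probability.Probability"
begin

definition probs_R :: "real measure set" where
  "probs_R = {M. prob_space M \<and> sets M = sets borel}"

definition moment_class :: "real \<Rightarrow> real \<Rightarrow> real measure set" where
  "moment_class eps B =
     {M \<in> probs_R. (\<integral>\<^sup>+ x. ennreal (\<bar>x\<bar> powr (1 + eps)) \<partial>M) \<le> ennreal B}"

definition cdf_R :: "real measure \<Rightarrow> real \<Rightarrow> real" where
  "cdf_R M x = measure M {..x}"

definition quantile_R :: "real \<Rightarrow> real measure \<Rightarrow> real" where
  "quantile_R p M = (LEAST z. cdf_R M z \<ge> p)"

definition cvar :: "real \<Rightarrow> real measure \<Rightarrow> real" where
  "cvar p M =
     (let q = quantile_R p M in
        (cdf_R M q - p) / (1 - p) * q + 1 / (1 - p) * (LINT y:{q<..}|M. y))"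

definition dom_D :: "real \<Rightarrow> real \<Rightarrow> real \<Rightarrow> real set" where
  "dom_D p eps B = {- (B powr (1 / (1 + eps))) .. B powr (1 / (1 + eps)) * (1 - p) powr (- 1 / (1 + eps))}"

text \<open>When eta << kappa the negative part of the log-density is eta-integrable, so the
  integral is +infinity exactly when the log-density is not eta-integrable.\<close>
definition KL :: "real measure \<Rightarrow> real measure \<Rightarrow> ereal" where
  "KL \<eta> \<kappa> =
     (if absolutely_continuous \<kappa> \<eta> \<and> integrable \<eta> (\<lambda>x. ln (enn2real (RN_deriv \<kappa> \<eta> x)))
      then ereal (\<integral>x. ln (enn2real (RN_deriv \<kappa> \<eta> x)) \<partial>\<eta>)
      else \<infinity>)"

definition KL_inf_U :: "real \<Rightarrow> real \<Rightarrow> real \<Rightarrow> real measure \<Rightarrow> real \<Rightarrow> ereal" where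
  "KL_inf_U p eps B \<eta> x = Inf {KL \<eta> \<kappa> | \<kappa>. \<kappa> \<in> moment_class eps B \<and> cvar p \<kappa> \<ge> x}"

definition KL_inf_L :: "real \<Rightarrow> real \<Rightarrow> real \<Rightarrow> real measure \<Rightarrow> real \<Rightarrow> ereal" where
  "KL_inf_L p eps B \<eta> x = Inf {KL \<eta> \<kappa> | \<kappa>. \<kappa> \<in> moment_class eps B \<and> cvar p \<kappa> \<le> x}"

end

theory Submission
  imports Defs
begin

text \<open>
  By the Donsker--Varadhan formula, \<open>KL(\<eta>, \<kappa>)\<close> is the supremum of
  \<open>\<integral> f d\<eta> - ln \<integral> exp f d\<kappa>\<close> over bounded Borel \<open>f\<close>. Bounded Borel functions can be
  approximated by bounded continuous ones in \<open>L\<^sup>1(\<eta>)\<close> and \<open>L\<^sup>1(\<kappa>)\<close> simultaneously, so the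
  supremum may be taken over continuous \<open>f\<close>; each such functional is continuous under weak
  convergence, hence \<open>KL\<close> is jointly lower semicontinuous.

  The moment bound makes \<open>\<L>\<close> tight and weakly closed and makes the positive part
  \<open>(x - z)\<^sup>+\<close> uniformly integrable over \<open>\<L>\<close>. Through the Rockafellar--Uryasev representation
  \<open>c\<^sub>\<pi>(\<kappa>) = min\<^sub>z (z + E\<^sub>\<kappa>(X - z)\<^sup>+ / (1 - \<pi>))\<close>, with the minimum at the quantile, the constraints
  \<open>c\<^sub>\<pi>(\<kappa>) \<ge> v\<close> and \<open>c\<^sub>\<pi>(\<kappa>) \<le> v\<close> are then closed under joint weak convergence of
  \<open>(\<kappa>, v)\<close> in \<open>\<L>\<close>. Given nearly optimal \<open>\<kappa>\<^sub>n\<close> along a subsequence, tightness yields a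
  weakly convergent further subsequence whose limit is feasible for \<open>(\<eta>, v)\<close>, and lower
  semicontinuity of \<open>KL\<close> bounds its divergence.
\<close>

lemma probs_R_iff_real_distribution: "M \<in> probs_R \<longleftrightarrow> real_distribution M"
  unfolding probs_R_def real_distribution_def real_distribution_axioms_def by auto

lemma borel_measurable_isCont: "(\<And>x. isCont h x) \<Longrightarrow> (h :: real \<Rightarrow> real) \<in> borel_measurable borel"
  by (intro borel_measurable_continuous_onI continuous_at_imp_continuous_on) auto

lemma (in real_distribution) borel_measurable_of_borel:
  "f \<in> borel_measurable borel \<Longrightarrow> f \<in> borel_measurable M"
  using measurable_cong_sets[OF events_eq_borel refl, of borel] by auto

lemma (in real_distribution) integrable_bounded_borel:
  fixes f :: "real \<Rightarrow> real"
  assumes "f \<in> borel_measurable borel" "\<And>x. \<bar>f x\<bar> \<le> C"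
  shows "integrable M f"
  by (intro integrable_const_bound[where B=C] AE_I2 borel_measurable_of_borel) (use assms in auto)

lemma tendsto_of_uniform_approx:
  fixes a :: "nat \<Rightarrow> real"
  assumes "\<And>e. 0 < e \<Longrightarrow> \<exists>b c. b \<longlonglongrightarrow> c \<and> (\<forall>n. \<bar>a n - b n\<bar> \<le> e) \<and> \<bar>l - c\<bar> \<le> e"
  shows "a \<longlonglongrightarrow> l"
proof (rule LIMSEQ_I)
  fix r :: real assume "0 < r"
  then obtain b c where b: "b \<longlonglongrightarrow> c" "\<And>n. \<bar>a n - b n\<bar> \<le> r / 4" "\<bar>l - c\<bar> \<le> r / 4"
    using assms[of "r / 4"] by auto
  obtain N where N: "\<And>n. n \<ge> N \<Longrightarrow> norm (b n - c) < r / 4"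
    using LIMSEQ_D[OF b(1), of "r / 4"] \<open>0 < r\<close> by auto
  have "norm (a n - l) < r" if "n \<ge> N" for n
    using N[OF that] b(2)[of n] b(3) unfolding real_norm_def by linarith
  then show "\<exists>N. \<forall>n\<ge>N. norm (a n - l) < r" by blast
qed

lemma weak_conv_m_subseq: "weak_conv_m Ms M \<Longrightarrow> strict_mono r \<Longrightarrow> weak_conv_m (Ms \<circ> r) M"
  unfolding weak_conv_m_def weak_conv_def by (auto intro: LIMSEQ_subseq_LIMSEQ[unfolded comp_def])

subsection \<open>Quantiles and the Rockafellar--Uryasev formula for CVaR\<close>

lemma cdf_R_eq_cdf: "cdf_R = cdf"
  by (simp add: cdf_R_def cdf_def fun_eq_iff)

definition cvar_objective :: "real \<Rightarrow> real measure \<Rightarrow> real \<Rightarrow> real" where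
  "cvar_objective p M z = z + (\<integral>x. max 0 (x - z) \<partial>M) / (1 - p)"

context real_distribution
begin

lemma integrable_indicator_real: "A \<in> events \<Longrightarrow> integrable M (indicator A :: real \<Rightarrow> real)"
  by (intro integrable_real_indicator) (auto simp: emeasure_eq_measure)

lemma ex_least_cdf_ge:
  assumes "0 < p" "p < 1"
  shows "\<exists>q. p \<le> cdf M q \<and> (\<forall>z. p \<le> cdf M z \<longrightarrow> q \<le> z)"
proof -
  define S where "S = {z. p \<le> cdf M z}"
  obtain N where N: "\<And>z. N \<le> z \<Longrightarrow> p < cdf M z"
    using order_tendstoD(1)[OF cdf_lim_at_top_prob \<open>p < 1\<close>] by (auto simp: eventually_at_top_linorder)
  have "N \<in> S" using N[of N] by (simp add: S_def)
  obtain b where b: "\<And>z. z \<le> b \<Longrightarrow> cdf M z < p"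
    using order_tendstoD(2)[OF cdf_lim_at_bot \<open>0 < p\<close>] by (auto simp: eventually_at_bot_linorder)
  then have "bdd_below S"
    unfolding bdd_below_def S_def by (metis mem_Collect_eq nle_le not_less)
  then have lower: "Inf S \<le> z" if "p \<le> cdf M z" for z
    using that by (intro cInf_lower) (auto simp: S_def)
  have "\<forall>\<^sub>F z in at_right (Inf S). p \<le> cdf M z"
    using eventually_at_right_less[of "Inf S"]
  proof (rule eventually_mono)
    fix z assume "Inf S < z"
    then obtain s where "s \<in> S" "s < z"
      using \<open>N \<in> S\<close> \<open>bdd_below S\<close> cInf_less_iff[of S z] by blast
    then show "p \<le> cdf M z" unfolding S_def using cdf_nondecreasing[of s z] by auto
  qed
  then have "p \<le> cdf M (Inf S)"
    using cdf_is_right_cont[of "Inf S"]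
    by (intro tendsto_lowerbound[OF _ _ trivial_limit_at_right_real]) (auto simp: continuous_within)
  then show ?thesis using lower by blast
qed

lemma integrable_hinge:
  assumes "integrable M (\<lambda>x. x)"
  shows "integrable M (\<lambda>x. max 0 (x - z))"
  using assms by (intro integrable_max integrable_diff) auto

lemma integral_hinge_add_indicator:
  assumes "integrable M (\<lambda>x. x)" "A \<in> events"
  shows "(\<integral>x. max 0 (x - z) + c * indicator A x \<partial>M) = (\<integral>x. max 0 (x - z) \<partial>M) + c * measure M A"
  using assms integrable_hinge[OF assms(1)] integrable_indicator_real[OF assms(2)] by (simp add: Bochner_Integration.integral_add)

context
  fixes p :: real
  assumes p: "0 < p" "p < 1"
begin

lemma quantile_R_least: "p \<le> cdf M (quantile_R p M) \<and> (\<forall>z. p \<le> cdf M z \<longrightarrow> quantile_R p M \<le> z)"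
proof -
  obtain q where q: "p \<le> cdf M q" "\<And>z. p \<le> cdf M z \<Longrightarrow> q \<le> z"
    using ex_least_cdf_ge[OF p] by blast
  have "quantile_R p M = q"
    unfolding quantile_R_def cdf_R_eq_cdf by (rule Least_equality) (use q in auto)
  then show ?thesis using q by simp
qed

lemma cdf_quantile_R_ge: "p \<le> cdf M (quantile_R p M)"
  using quantile_R_least by blast

lemma quantile_R_le_iff: "quantile_R p M \<le> z \<longleftrightarrow> p \<le> cdf M z"
  using quantile_R_least cdf_nondecreasing[of "quantile_R p M" z] by (auto intro: order_trans)

lemma measure_lessThan_quantile_R_le: "measure M {..<quantile_R p M} \<le> p"
proof (rule tendsto_upperbound[OF cdf_at_left _ trivial_limit_at_left_real])
  show "\<forall>\<^sub>F z in at_left (quantile_R p M). cdf M z \<le> p"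
  proof (rule eventually_mono)
    show "\<forall>\<^sub>F z in at_left (quantile_R p M). z \<in> {quantile_R p M - 1<..<quantile_R p M}"
      by (rule eventually_at_left_real) simp
    show "cdf M z \<le> p" if "z \<in> {quantile_R p M - 1<..<quantile_R p M}" for z
      using that quantile_R_le_iff[of z] by auto
  qed
qed

context
  assumes integrable_id: "integrable M (\<lambda>x. x)"
begin

lemma cvar_eq_cvar_objective_quantile: "cvar p M = cvar_objective p M (quantile_R p M)"
proof -
  define q where "q = quantile_R p M"
  define I where "I = (LINT y:{q<..}|M. y)"
  have "(\<integral>x. max 0 (x - q) \<partial>M) = (\<integral>x. indicator {q<..} x * x - q * indicator {q<..} x \<partial>M)"
    by (intro Bochner_Integration.integral_cong) (auto simp: indicator_def)
  also have "\<dots> = I - q * measure M {q<..}"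
    using integrable_mult_indicator[of "{q<..}" M "\<lambda>x. x"] integrable_id integrable_indicator_real[of "{q<..}"]
    by (simp add: Bochner_Integration.integral_diff I_def set_lebesgue_integral_def)
  also have "measure M {q<..} = 1 - cdf M q"
    using prob_compl[of "{..q}"] by (simp add: cdf_def Compl_eq_Diff_UNIV[symmetric])
  finally have hinge: "(\<integral>x. max 0 (x - q) \<partial>M) = I - q * (1 - cdf M q)" .
  have "cvar p M = (cdf M q - p) / (1 - p) * q + 1 / (1 - p) * I"
    by (simp add: cvar_def Let_def cdf_R_eq_cdf q_def I_def)
  also have "\<dots> = q + (I - q * (1 - cdf M q)) / (1 - p)"
    using p by (simp add: divide_simps) (simp add: algebra_simps)
  also have "\<dots> = cvar_objective p M q"
    by (simp add: cvar_objective_def hinge)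
  finally show ?thesis by (simp add: q_def)
qed

lemma hinge_gap_ge:
  "(quantile_R p M - z) * (1 - p) \<le> (\<integral>x. max 0 (x - z) \<partial>M) - (\<integral>x. max 0 (x - quantile_R p M) \<partial>M)"
proof -
  define q where "q = quantile_R p M"
  show ?thesis
  proof (cases "z < q")
    case True
    have "(\<integral>x. max 0 (x - q) + (q - z) * indicator {q..} x \<partial>M) \<le> (\<integral>x. max 0 (x - z) \<partial>M)"
      using True integrable_hinge[OF integrable_id]
      by (intro integral_mono Bochner_Integration.integrable_add integrable_mult_right integrable_indicator_real)
        (auto simp: indicator_def)
    moreover have "measure M {q..} = 1 - measure M {..<q}"
      using prob_compl[of "{..<q}"] by (simp add: Compl_eq_Diff_UNIV[symmetric])
    moreover have "(q - z) * (1 - p) \<le> (q - z) * (1 - measure M {..<q})"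
      using measure_lessThan_quantile_R_le True by (intro mult_left_mono) (auto simp: q_def)
    ultimately show ?thesis
      using integral_hinge_add_indicator[OF integrable_id, of "{q..}" q "q - z"] by (simp add: q_def)
  next
    case False
    have "(\<integral>x. max 0 (x - q) + (q - z) * indicator {q<..} x \<partial>M) \<le> (\<integral>x. max 0 (x - z) \<partial>M)"
      using False integrable_hinge[OF integrable_id]
      by (intro integral_mono Bochner_Integration.integrable_add integrable_mult_right integrable_indicator_real)
        (auto simp: indicator_def)
    moreover have "measure M {q<..} = 1 - cdf M q"
      using prob_compl[of "{..q}"] by (simp add: cdf_def Compl_eq_Diff_UNIV[symmetric])
    moreover have "(q - z) * (1 - p) \<le> (q - z) * (1 - cdf M q)"
      using cdf_quantile_R_ge False by (intro mult_left_mono_neg) (auto simp: q_def)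
    ultimately show ?thesis
      using integral_hinge_add_indicator[OF integrable_id, of "{q<..}" q "q - z"] by (simp add: q_def)
  qed
qed

lemma cvar_le_cvar_objective: "cvar p M \<le> cvar_objective p M z"
proof -
  have "(quantile_R p M - z) * (1 - p) / (1 - p) \<le>
      ((\<integral>x. max 0 (x - z) \<partial>M) - (\<integral>x. max 0 (x - quantile_R p M) \<partial>M)) / (1 - p)"
    using hinge_gap_ge p by (intro divide_right_mono) auto
  then show ?thesis
    using p by (simp add: cvar_eq_cvar_objective_quantile cvar_objective_def diff_divide_distrib)
qed

lemma cvar_objective_lipschitz:
  "cvar_objective p M z \<le> cvar_objective p M w + (1 + 1 / (1 - p)) * \<bar>z - w\<bar>"
proof -
  have "(\<integral>x. max 0 (x - z) \<partial>M) \<le> (\<integral>x. max 0 (x - w) + \<bar>z - w\<bar> \<partial>M)"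
    using integrable_hinge[OF integrable_id] by (intro integral_mono) auto
  also have "\<dots> = (\<integral>x. max 0 (x - w) \<partial>M) + \<bar>z - w\<bar>"
    using integrable_hinge[OF integrable_id] prob_space by simp
  finally have "(\<integral>x. max 0 (x - z) \<partial>M) / (1 - p) \<le> (\<integral>x. max 0 (x - w) \<partial>M) / (1 - p) + \<bar>z - w\<bar> / (1 - p)"
    using p by (simp add: divide_right_mono add_divide_distrib[symmetric])
  then show ?thesis
    unfolding cvar_objective_def by (simp add: algebra_simps)
qed

end

end

end

subsection \<open>The moment class\<close>

lemma abs_le_abs_powr: "1 \<le> \<bar>x :: real\<bar> \<Longrightarrow> 1 \<le> a \<Longrightarrow> \<bar>x\<bar> \<le> \<bar>x\<bar> powr a"
  using powr_mono[of 1 a "\<bar>x\<bar>"] by simp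

lemma abs_le_one_plus_abs_powr: "1 \<le> a \<Longrightarrow> \<bar>x :: real\<bar> \<le> 1 + \<bar>x\<bar> powr a"
  using abs_le_abs_powr[of x a] powr_ge_zero[of "\<bar>x\<bar>" a] by (cases "\<bar>x\<bar> \<le> 1") linarith+

lemma isCont_abs_powr: "0 < a \<Longrightarrow> isCont (\<lambda>x :: real. \<bar>x\<bar> powr a) x"
  using continuous_on_powr'[of UNIV "\<lambda>x::real. \<bar>x\<bar>" "\<lambda>_. a"]
  by (auto intro: continuous_intros simp: continuous_on_eq_continuous_at)

lemma moment_class_real_distribution: "\<kappa> \<in> moment_class eps B \<Longrightarrow> real_distribution \<kappa>"
  by (auto simp: moment_class_def probs_R_iff_real_distribution)

context
  fixes eps B :: real
  assumes eps: "0 \<le> eps" and B: "0 \<le> B"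
begin

lemma
  assumes "\<kappa> \<in> moment_class eps B"
  shows moment_class_integrable_moment: "integrable \<kappa> (\<lambda>x. \<bar>x\<bar> powr (1 + eps))"
    and moment_class_moment_le: "(\<integral>x. \<bar>x\<bar> powr (1 + eps) \<partial>\<kappa>) \<le> B"
    and moment_class_integrable_id: "integrable \<kappa> (\<lambda>x. x)"
proof -
  interpret real_distribution \<kappa> using moment_class_real_distribution[OF assms] .
  have nn: "(\<integral>\<^sup>+ x. ennreal (\<bar>x\<bar> powr (1 + eps)) \<partial>\<kappa>) \<le> ennreal B"
    using assms by (auto simp: moment_class_def)
  have meas: "(\<lambda>x. \<bar>x\<bar> powr (1 + eps)) \<in> borel_measurable \<kappa>"
    using eps by (intro borel_measurable_of_borel borel_measurable_isCont isCont_abs_powr) auto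
  show int: "integrable \<kappa> (\<lambda>x. \<bar>x\<bar> powr (1 + eps))"
    using nn by (intro integrableI_bounded meas) (simp add: le_less_trans[OF _ ennreal_less_top])
  have "ennreal (\<integral>x. \<bar>x\<bar> powr (1 + eps) \<partial>\<kappa>) \<le> ennreal B"
    using nn nn_integral_eq_integral[OF int] by auto
  then show "(\<integral>x. \<bar>x\<bar> powr (1 + eps) \<partial>\<kappa>) \<le> B"
    using B by (simp add: ennreal_le_iff)
  show "integrable \<kappa> (\<lambda>x. x)"
  proof (rule Bochner_Integration.integrable_bound)
    show "integrable \<kappa> (\<lambda>x. 1 + \<bar>x\<bar> powr (1 + eps))" using int by simp
    show "(\<lambda>x. x) \<in> borel_measurable \<kappa>" by (intro borel_measurable_of_borel) simp
    show "AE x in \<kappa>. norm x \<le> norm (1 + \<bar>x\<bar> powr (1 + eps))"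
      using abs_le_one_plus_abs_powr[of "1 + eps"] eps by (intro AE_I2) auto
  qed
qed

lemma moment_class_tail_le:
  assumes "\<kappa> \<in> moment_class eps B" "1 \<le> t"
  shows "measure \<kappa> {x. t \<le> \<bar>x\<bar>} \<le> B / t"
proof -
  interpret real_distribution \<kappa> using moment_class_real_distribution[OF assms(1)] .
  have [measurable]: "(\<lambda>x. \<bar>x\<bar> powr (1 + eps)) \<in> borel_measurable borel"
    using eps by (intro borel_measurable_isCont isCont_abs_powr) auto
  have "{x. t \<le> \<bar>x\<bar>} \<subseteq> {x. t \<le> \<bar>x\<bar> powr (1 + eps)}"
    using abs_le_abs_powr[of _ "1 + eps"] assms(2) eps by (force intro: order_trans)
  then have "measure \<kappa> {x. t \<le> \<bar>x\<bar>} \<le> measure \<kappa> {x. t \<le> \<bar>x\<bar> powr (1 + eps)}"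
    by (intro finite_measure_mono) auto
  also have "\<dots> \<le> (\<integral>x. \<bar>x\<bar> powr (1 + eps) \<partial>\<kappa>) / t"
    using integral_Markov_inequality_measure[OF moment_class_integrable_moment[OF assms(1)], of UNIV t]
      assms(2) by auto
  also have "\<dots> \<le> B / t"
    using moment_class_moment_le[OF assms(1)] assms(2) by (intro divide_right_mono) auto
  finally show ?thesis .
qed

lemma tight_moment_class:
  assumes "\<And>n. \<kappa>s n \<in> moment_class eps B"
  shows "tight \<kappa>s"
  unfolding tight_def
proof (intro conjI allI impI)
  show "real_distribution (\<kappa>s n)" for n using moment_class_real_distribution[OF assms] .
  fix e :: real assume "0 < e"
  define t where "t = 1 + B / e"
  have t: "1 \<le> t" "B / t < e"
    using \<open>0 < e\<close> B by (auto simp: t_def field_simps)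
  have "1 - e < measure (\<kappa>s n) {-t<..t}" for n
  proof -
    interpret real_distribution "\<kappa>s n" using moment_class_real_distribution[OF assms] .
    have "1 - measure (\<kappa>s n) {-t<..t} = measure (\<kappa>s n) (UNIV - {-t<..t})"
      using prob_compl[of "{-t<..t}"] by simp
    also have "\<dots> \<le> measure (\<kappa>s n) {x. t \<le> \<bar>x\<bar>}"
      by (intro finite_measure_mono) auto
    also have "\<dots> < e"
      using moment_class_tail_le[OF assms[of n] t(1)] t(2) by linarith
    finally show ?thesis by linarith
  qed
  moreover have "-t < t" using t by simp
  ultimately show "\<exists>a b. a < b \<and> (\<forall>n. 1 - e < measure (\<kappa>s n) {a<..b})" by blast
qed

lemma moment_class_weak_limit:
  assumes \<kappa>s: "\<And>n. \<kappa>s n \<in> moment_class eps B"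
    and \<kappa>: "real_distribution \<kappa>" and conv: "weak_conv_m \<kappa>s \<kappa>"
  shows "\<kappa> \<in> moment_class eps B"
proof -
  interpret real_distribution \<kappa> by fact
  define g where "g = (\<lambda>K x :: real. min (\<bar>x\<bar> powr (1 + eps)) K)"
  have g_cont: "isCont (g K) x" for K x
    unfolding g_def using eps by (intro continuous_min isCont_abs_powr continuous_const) auto
  have g_integrable: "integrable \<mu> (g K)" if "real_distribution \<mu>" "0 \<le> K" for \<mu> K
    using that by (intro real_distribution.integrable_bounded_borel[where C = K] borel_measurable_isCont g_cont)
      (auto simp: g_def)
  have integral_g_le: "(\<integral>x. g K x \<partial>\<kappa>) \<le> B" if "0 \<le> K" for K
  proof (rule LIMSEQ_le_const2)
    show "(\<lambda>n. \<integral>x. g K x \<partial>\<kappa>s n) \<longlonglongrightarrow> (\<integral>x. g K x \<partial>\<kappa>)"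
      using moment_class_real_distribution[OF \<kappa>s] \<kappa> conv \<open>0 \<le> K\<close>
      by (intro weak_conv_imp_integral_bdd_continuous_conv[where B = K] g_cont) (auto simp: g_def)
    show "\<exists>N. \<forall>n\<ge>N. (\<integral>x. g K x \<partial>\<kappa>s n) \<le> B"
    proof (intro exI allI impI)
      fix n
      have "(\<integral>x. g K x \<partial>\<kappa>s n) \<le> (\<integral>x. \<bar>x\<bar> powr (1 + eps) \<partial>\<kappa>s n)"
        by (rule integral_mono[OF g_integrable[OF moment_class_real_distribution[OF \<kappa>s] \<open>0 \<le> K\<close>]
              moment_class_integrable_moment[OF \<kappa>s]]) (simp add: g_def)
      then show "(\<integral>x. g K x \<partial>\<kappa>s n) \<le> B"
        using moment_class_moment_le[OF \<kappa>s, of n] by linarith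
    qed
  qed
  have "(\<lambda>n. \<integral>\<^sup>+x. ennreal (g (real n) x) \<partial>\<kappa>) \<longlonglongrightarrow> (\<integral>\<^sup>+x. ennreal (\<bar>x\<bar> powr (1 + eps)) \<partial>\<kappa>)"
  proof (rule nn_integral_LIMSEQ)
    show "incseq (\<lambda>n x. ennreal (g (real n) x))"
      unfolding incseq_def le_fun_def g_def by (auto intro!: ennreal_leI)
    show "(\<lambda>x. ennreal (g (real n) x)) \<in> borel_measurable \<kappa>" for n
      by (intro borel_measurable_of_borel measurable_compose[OF _ measurable_ennreal]
          borel_measurable_isCont g_cont)
    show "(\<lambda>n. ennreal (g (real n) x)) \<longlonglongrightarrow> ennreal (\<bar>x\<bar> powr (1 + eps))" for x
    proof (rule tendsto_eventually)
      obtain N :: nat where "\<bar>x\<bar> powr (1 + eps) \<le> real N" using real_arch_simple by blast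
      then show "\<forall>\<^sub>F n in sequentially. ennreal (g (real n) x) = ennreal (\<bar>x\<bar> powr (1 + eps))"
        unfolding eventually_sequentially g_def by (intro exI[of _ N]) auto
    qed
  qed
  moreover have "(\<integral>\<^sup>+x. ennreal (g (real n) x) \<partial>\<kappa>) \<le> ennreal B" for n
    using integral_g_le[of "real n"] g_integrable[OF \<kappa>, of "real n"]
    by (subst nn_integral_eq_integral) (auto intro: ennreal_leI simp: g_def)
  ultimately have "(\<integral>\<^sup>+x. ennreal (\<bar>x\<bar> powr (1 + eps)) \<partial>\<kappa>) \<le> ennreal B"
    by (intro LIMSEQ_le_const2) auto
  then show ?thesis
    using \<kappa> by (simp add: moment_class_def probs_R_iff_real_distribution)
qed

lemma moment_class_quantile_bound:
  assumes \<kappa>: "\<kappa> \<in> moment_class eps B" and p: "0 < p" "p < 1"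
  shows "\<bar>quantile_R p \<kappa>\<bar> \<le> 1 + B / p + B / (1 - p)"
proof -
  interpret real_distribution \<kappa> using moment_class_real_distribution[OF \<kappa>] .
  define t where "t = 1 + B / p + B / (1 - p)"
  have "p \<noteq> 0" "1 - p \<noteq> 0" using p by auto
  then have "p * t = p + B + p * (B / (1 - p))" "(1 - p) * t = 1 - p + (1 - p) * (B / p) + B"
    by (simp_all add: t_def distrib_left)
  moreover have "0 \<le> B / p" "0 \<le> B / (1 - p)" "0 \<le> p * (B / (1 - p))" "0 \<le> (1 - p) * (B / p)"
    using p B by simp_all
  ultimately have t: "1 \<le> t" "B < p * t" "B < (1 - p) * t"
    using p t_def by linarith+
  then have tail: "measure \<kappa> {x. t \<le> \<bar>x\<bar>} * t \<le> B"
    using moment_class_tail_le[OF \<kappa> t(1)] by (simp add: field_simps)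
  have "-t \<le> quantile_R p \<kappa>"
  proof (rule ccontr)
    assume "\<not> -t \<le> quantile_R p \<kappa>"
    then have "p \<le> cdf \<kappa> (-t)" using quantile_R_le_iff[OF p, of "-t"] by simp
    also have "cdf \<kappa> (-t) \<le> measure \<kappa> {x. t \<le> \<bar>x\<bar>}"
      unfolding cdf_def by (intro finite_measure_mono) auto
    finally show False using tail t by (smt (verit) mult_right_mono)
  qed
  moreover have "quantile_R p \<kappa> \<le> t"
  proof (rule ccontr)
    assume "\<not> quantile_R p \<kappa> \<le> t"
    then have "1 - p < 1 - cdf \<kappa> t" using quantile_R_le_iff[OF p, of t] by simp
    also have "1 - cdf \<kappa> t = measure \<kappa> {t<..}"
      using prob_compl[of "{..t}"] by (simp add: cdf_def Compl_eq_Diff_UNIV[symmetric])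
    also have "\<dots> \<le> measure \<kappa> {x. t \<le> \<bar>x\<bar>}"
      by (intro finite_measure_mono) auto
    finally show False using tail t by (smt (verit) mult_right_mono)
  qed
  ultimately show ?thesis by (simp add: t_def abs_le_iff)
qed

lemma hinge_sub_truncation_le:
  fixes x z K :: real
  assumes "0 < K" "2 * \<bar>z\<bar> \<le> K"
  shows "max 0 (x - z) - min (max 0 (x - z)) K \<le> 2 * (2 / K) powr eps * \<bar>x\<bar> powr (1 + eps)"
proof (cases "max 0 (x - z) \<le> K")
  case False
  then have "K < x - z" using assms(1) by (auto simp: max_def split: if_splits)
  then have x: "K / 2 < x" using assms by linarith
  then have "1 \<le> (2 * x / K) powr eps"
    using assms eps by (intro ge_one_powr_ge_zero) (auto simp: field_simps)
  then have "2 * x \<le> 2 * x * (2 * x / K) powr eps"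
    using x assms by simp
  also have "\<dots> = 2 * (2 / K) powr eps * (x * x powr eps)"
    using powr_mult[of "2 / K" x eps] x assms by simp
  also have "x * x powr eps = x powr (1 + eps)"
    using x assms by (simp add: powr_add)
  finally show ?thesis
    using False x assms by auto
qed (use powr_ge_zero in auto)

lemma integral_hinge_truncation_le:
  assumes \<kappa>: "\<kappa> \<in> moment_class eps B" and K: "0 < K" "2 * \<bar>z\<bar> \<le> K"
  shows "\<bar>(\<integral>x. max 0 (x - z) \<partial>\<kappa>) - (\<integral>x. min (max 0 (x - z)) K \<partial>\<kappa>)\<bar> \<le> 2 * B * (2 / K) powr eps"
proof -
  interpret real_distribution \<kappa> using moment_class_real_distribution[OF \<kappa>] .
  have hinge: "integrable \<kappa> (\<lambda>x. max 0 (x - z))"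
    by (rule integrable_hinge[OF moment_class_integrable_id[OF \<kappa>]])
  have trunc: "integrable \<kappa> (\<lambda>x. min (max 0 (x - z)) K)"
    using K by (intro integrable_bounded_borel[where C = K]) auto
  have "(\<integral>x. max 0 (x - z) \<partial>\<kappa>) - (\<integral>x. min (max 0 (x - z)) K \<partial>\<kappa>)
      = (\<integral>x. max 0 (x - z) - min (max 0 (x - z)) K \<partial>\<kappa>)"
    using hinge trunc by simp
  also have "\<dots> \<le> (\<integral>x. 2 * (2 / K) powr eps * \<bar>x\<bar> powr (1 + eps) \<partial>\<kappa>)"
    using hinge trunc moment_class_integrable_moment[OF \<kappa>] hinge_sub_truncation_le[OF K]
    by (intro integral_mono) auto
  also have "\<dots> \<le> 2 * (2 / K) powr eps * B"
    using moment_class_moment_le[OF \<kappa>] by (simp add: mult_left_mono)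
  finally have "(\<integral>x. max 0 (x - z) \<partial>\<kappa>) - (\<integral>x. min (max 0 (x - z)) K \<partial>\<kappa>) \<le> 2 * B * (2 / K) powr eps"
    by (simp add: mult_ac)
  moreover have "(\<integral>x. min (max 0 (x - z)) K \<partial>\<kappa>) \<le> (\<integral>x. max 0 (x - z) \<partial>\<kappa>)"
    using hinge trunc by (intro integral_mono) auto
  ultimately show ?thesis by simp
qed

context
  assumes eps_pos: "0 < eps"
begin

lemma weak_conv_integral_hinge:
  assumes \<kappa>s: "\<And>n. \<kappa>s n \<in> moment_class eps B" and \<kappa>: "\<kappa> \<in> moment_class eps B"
    and conv: "weak_conv_m \<kappa>s \<kappa>"
  shows "(\<lambda>n. \<integral>x. max 0 (x - z) \<partial>\<kappa>s n) \<longlonglongrightarrow> (\<integral>x. max 0 (x - z) \<partial>\<kappa>)"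
proof (rule tendsto_of_uniform_approx)
  fix e :: real assume "0 < e"
  have "((\<lambda>K. 2 * B * (2 / K) powr eps) \<longlongrightarrow> 2 * B * 0) at_top"
    using eps_pos filterlim_at_top_imp_at_infinity[OF filterlim_ident]
    by (intro tendsto_mult tendsto_const tendsto_zero_powrI tendsto_divide_0)
      (auto simp: eventually_at_top_linorder intro: exI[of _ 0])
  then have "\<forall>\<^sub>F K in at_top. 2 * B * (2 / K) powr eps < e \<and> 2 * \<bar>z\<bar> + 1 \<le> K"
    using \<open>0 < e\<close> by (intro eventually_conj order_tendstoD(2) eventually_ge_at_top) auto
  then obtain K where K: "2 * B * (2 / K) powr eps < e" "2 * \<bar>z\<bar> + 1 \<le> K"
    by (auto simp: eventually_at_top_linorder)
  then have "0 < K" "2 * \<bar>z\<bar> \<le> K" by auto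
  show "\<exists>b c. b \<longlonglongrightarrow> c \<and> (\<forall>n. \<bar>(\<integral>x. max 0 (x - z) \<partial>\<kappa>s n) - b n\<bar> \<le> e) \<and>
      \<bar>(\<integral>x. max 0 (x - z) \<partial>\<kappa>) - c\<bar> \<le> e"
  proof (intro exI conjI allI)
    show "(\<lambda>n. \<integral>x. min (max 0 (x - z)) K \<partial>\<kappa>s n) \<longlonglongrightarrow> (\<integral>x. min (max 0 (x - z)) K \<partial>\<kappa>)"
      using moment_class_real_distribution[OF \<kappa>s] moment_class_real_distribution[OF \<kappa>] conv \<open>0 < K\<close>
      by (intro weak_conv_imp_integral_bdd_continuous_conv[where B = K]) (auto intro!: continuous_intros)
    show "\<bar>(\<integral>x. max 0 (x - z) \<partial>\<kappa>s n) - (\<integral>x. min (max 0 (x - z)) K \<partial>\<kappa>s n)\<bar> \<le> e" for n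
      using integral_hinge_truncation_le[OF \<kappa>s[of n] \<open>0 < K\<close> \<open>2 * \<bar>z\<bar> \<le> K\<close>] K(1) by linarith
    show "\<bar>(\<integral>x. max 0 (x - z) \<partial>\<kappa>) - (\<integral>x. min (max 0 (x - z)) K \<partial>\<kappa>)\<bar> \<le> e"
      using integral_hinge_truncation_le[OF \<kappa> \<open>0 < K\<close> \<open>2 * \<bar>z\<bar> \<le> K\<close>] K(1) by linarith
  qed
qed

lemma weak_conv_cvar_objective:
  assumes "\<And>n. \<kappa>s n \<in> moment_class eps B" "\<kappa> \<in> moment_class eps B" "weak_conv_m \<kappa>s \<kappa>"
  shows "(\<lambda>n. cvar_objective p (\<kappa>s n) z) \<longlonglongrightarrow> cvar_objective p \<kappa> z"
  unfolding cvar_objective_def divide_inverse by (intro tendsto_intros weak_conv_integral_hinge[OF assms])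

context
  fixes p :: real
  assumes p: "0 < p" "p < 1"
begin

lemma moment_class_cvar_le_cvar_objective: "\<kappa> \<in> moment_class eps B \<Longrightarrow> cvar p \<kappa> \<le> cvar_objective p \<kappa> z"
  using real_distribution.cvar_le_cvar_objective[OF moment_class_real_distribution p
      moment_class_integrable_id] .

lemma moment_class_cvar_eq_cvar_objective_quantile:
  "\<kappa> \<in> moment_class eps B \<Longrightarrow> cvar p \<kappa> = cvar_objective p \<kappa> (quantile_R p \<kappa>)"
  using real_distribution.cvar_eq_cvar_objective_quantile[OF moment_class_real_distribution p
      moment_class_integrable_id] .

lemma cvar_ge_of_weak_conv:
  assumes \<kappa>s: "\<And>n. \<kappa>s n \<in> moment_class eps B" and \<kappa>: "\<kappa> \<in> moment_class eps B"
    and conv: "weak_conv_m \<kappa>s \<kappa>" and "vs \<longlonglongrightarrow> v" and le: "\<And>n. vs n \<le> cvar p (\<kappa>s n)"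
  shows "v \<le> cvar p \<kappa>"
proof -
  define q where "q = quantile_R p \<kappa>"
  have "vs n \<le> cvar_objective p (\<kappa>s n) q" for n
    using le[of n] moment_class_cvar_le_cvar_objective[OF \<kappa>s] by (rule order_trans)
  then have "v \<le> cvar_objective p \<kappa> q"
    by (intro LIMSEQ_le[OF \<open>vs \<longlonglongrightarrow> v\<close> weak_conv_cvar_objective[OF \<kappa>s \<kappa> conv]]) auto
  then show ?thesis
    by (simp add: q_def moment_class_cvar_eq_cvar_objective_quantile[OF \<kappa>])
qed

lemma cvar_le_of_weak_conv:
  assumes \<kappa>s: "\<And>n. \<kappa>s n \<in> moment_class eps B" and \<kappa>: "\<kappa> \<in> moment_class eps B"
    and conv: "weak_conv_m \<kappa>s \<kappa>" and "vs \<longlonglongrightarrow> v" and le: "\<And>n. cvar p (\<kappa>s n) \<le> vs n"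
  shows "cvar p \<kappa> \<le> v"
proof -
  define qs where "qs n = quantile_R p (\<kappa>s n)" for n
  have "bounded (range qs)"
    using moment_class_quantile_bound[OF \<kappa>s p] by (intro boundedI) (auto simp: qs_def)
  then obtain l r where r: "strict_mono r" "(qs \<circ> r) \<longlonglongrightarrow> l"
    using bounded_imp_convergent_subsequence by blast
  define L where "L = 1 + 1 / (1 - p)"
  have "cvar_objective p (\<kappa>s (r k)) l \<le> vs (r k) + L * \<bar>l - qs (r k)\<bar>" for k
    using real_distribution.cvar_objective_lipschitz[OF moment_class_real_distribution[OF \<kappa>s] p
        moment_class_integrable_id[OF \<kappa>s], of "r k" l "qs (r k)"]
      moment_class_cvar_eq_cvar_objective_quantile[OF \<kappa>s, of "r k"] le[of "r k"]
    by (simp add: L_def qs_def)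
  moreover have "(\<lambda>k. cvar_objective p (\<kappa>s (r k)) l) \<longlonglongrightarrow> cvar_objective p \<kappa> l"
    using weak_conv_cvar_objective[OF _ \<kappa> weak_conv_m_subseq[OF conv r(1)]] \<kappa>s by (simp add: comp_def)
  moreover have "(\<lambda>k. vs (r k) + L * \<bar>l - qs (r k)\<bar>) \<longlonglongrightarrow> v + L * \<bar>l - l\<bar>"
    using LIMSEQ_subseq_LIMSEQ[OF \<open>vs \<longlonglongrightarrow> v\<close> r(1)] r(2)
    by (intro tendsto_intros) (auto simp: comp_def)
  ultimately have "cvar_objective p \<kappa> l \<le> v"
    by (intro LIMSEQ_le) auto
  then show ?thesis
    using moment_class_cvar_le_cvar_objective[OF \<kappa>, of l] by linarith
qed

end

end

end

subsection \<open>Approximation of bounded Borel functions by continuous ones\<close>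

definition bounded_borel :: "(real \<Rightarrow> real) \<Rightarrow> bool" where
  "bounded_borel f \<longleftrightarrow> f \<in> borel_measurable borel \<and> (\<exists>C. \<forall>x. \<bar>f x\<bar> \<le> C)"

lemma bounded_borelI: "f \<in> borel_measurable borel \<Longrightarrow> (\<And>x. \<bar>f x\<bar> \<le> C) \<Longrightarrow> bounded_borel f"
  unfolding bounded_borel_def by blast

lemma bounded_borelE:
  assumes "bounded_borel f"
  obtains C where "f \<in> borel_measurable borel" "\<And>x. \<bar>f x\<bar> \<le> C"
  using assms unfolding bounded_borel_def by blast

lemma bounded_borel_isCont: "(\<And>x. isCont h x) \<Longrightarrow> (\<And>x. \<bar>h x\<bar> \<le> C) \<Longrightarrow> bounded_borel h"
  by (intro bounded_borelI borel_measurable_isCont)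

lemma bounded_borel_const: "bounded_borel (\<lambda>x. c)"
  by (rule bounded_borelI[where C = "\<bar>c\<bar>"]) auto

lemma bounded_borel_add:
  assumes "bounded_borel f" "bounded_borel g"
  shows "bounded_borel (\<lambda>x. f x + g x)"
proof -
  obtain C D where "f \<in> borel_measurable borel" "\<And>x. \<bar>f x\<bar> \<le> C"
    "g \<in> borel_measurable borel" "\<And>x. \<bar>g x\<bar> \<le> D"
    using assms by (meson bounded_borelE)
  then show ?thesis
    by (intro bounded_borelI[where C = "C + D"] borel_measurable_add) (auto intro: abs_triangle_ineq[THEN order_trans] add_mono)
qed

lemma bounded_borel_cmult:
  assumes "bounded_borel f"
  shows "bounded_borel (\<lambda>x. a * f x)"
proof -
  obtain C where "f \<in> borel_measurable borel" "\<And>x. \<bar>f x\<bar> \<le> C"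
    using assms by (meson bounded_borelE)
  then show ?thesis
    by (intro bounded_borelI[where C = "\<bar>a\<bar> * C"] borel_measurable_times) (auto simp: abs_mult mult_left_mono)
qed

lemma bounded_borel_diff: "bounded_borel f \<Longrightarrow> bounded_borel g \<Longrightarrow> bounded_borel (\<lambda>x. f x - g x)"
  using bounded_borel_add[of f "\<lambda>x. -1 * g x"] bounded_borel_cmult[of g "-1"] by simp

lemma bounded_borel_abs:
  assumes "bounded_borel f"
  shows "bounded_borel (\<lambda>x. \<bar>f x\<bar>)"
proof -
  obtain C where "f \<in> borel_measurable borel" "\<And>x. \<bar>f x\<bar> \<le> C"
    using assms by (meson bounded_borelE)
  then show ?thesis by (intro bounded_borelI[where C = C] borel_measurable_abs) auto
qed

lemmas bounded_borel_intros =
  bounded_borel_const bounded_borel_add bounded_borel_cmult bounded_borel_diff bounded_borel_abs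

lemma (in real_distribution) integrable_if_bounded_borel: "bounded_borel f \<Longrightarrow> integrable M f"
  by (elim bounded_borelE) (rule integrable_bounded_borel)

lemma (in real_distribution) inner_regular_compact:
  assumes "A \<in> events" "0 < e"
  shows "\<exists>K. compact K \<and> K \<subseteq> A \<and> measure M A < measure M K + e"
proof (cases "measure M A < e")
  case False
  have "ennreal (measure M A - e) < emeasure M A"
    using False \<open>0 < e\<close> by (simp add: emeasure_eq_measure ennreal_lessI)
  also have "emeasure M A = (SUP K \<in> {K. K \<subseteq> A \<and> compact K}. emeasure M K)"
    using assms(1) by (intro inner_regular[OF events_eq_borel]) auto
  finally obtain K where K: "K \<subseteq> A" "compact K" "ennreal (measure M A - e) < emeasure M K"
    unfolding less_SUP_iff by blast
  then have "measure M A - e < measure M K"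
    using False by (simp add: emeasure_eq_measure ennreal_less_iff)
  then show ?thesis using K by auto
qed (intro exI[of _ "{}"], auto)

definition cont_L1_approx :: "real measure set \<Rightarrow> (real \<Rightarrow> real) \<Rightarrow> bool" where
  "cont_L1_approx Ms f \<longleftrightarrow> bounded_borel f \<and>
     (\<forall>e>0. \<exists>h. (\<forall>x. isCont h x) \<and> (\<exists>C. \<forall>x. \<bar>h x\<bar> \<le> C) \<and> (\<forall>\<mu>\<in>Ms. (\<integral>x. \<bar>f x - h x\<bar> \<partial>\<mu>) < e))"

lemma cont_L1_approxE:
  assumes "cont_L1_approx Ms f" "0 < e"
  obtains h C where "\<And>x. isCont h x" "\<And>x. \<bar>h x\<bar> \<le> C" "\<And>\<mu>. \<mu> \<in> Ms \<Longrightarrow> (\<integral>x. \<bar>f x - h x\<bar> \<partial>\<mu>) < e"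
  using assms unfolding cont_L1_approx_def by blast

context
  fixes Ms :: "real measure set"
  assumes Ms: "\<And>\<mu>. \<mu> \<in> Ms \<Longrightarrow> real_distribution \<mu>"
begin

lemma cont_L1_approx_indicator:
  assumes "finite Ms" and A: "A \<in> sets borel"
  shows "cont_L1_approx Ms (indicator A)"
  unfolding cont_L1_approx_def
proof (intro conjI allI impI)
  show "bounded_borel (indicator A)"
    using A by (intro bounded_borelI[where C = 1]) (auto simp: indicator_def)
  fix e :: real assume "0 < e"
  have inner: "\<forall>\<mu>\<in>Ms. \<exists>K. compact K \<and> K \<subseteq> S \<and> measure \<mu> S < measure \<mu> K + e / 2"
    if "S \<in> sets borel" for S
  proof
    fix \<mu> assume "\<mu> \<in> Ms"
    then interpret real_distribution \<mu> by (rule Ms)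
    show "\<exists>K. compact K \<and> K \<subseteq> S \<and> measure \<mu> S < measure \<mu> K + e / 2"
      using inner_regular_compact[of S "e / 2"] that \<open>0 < e\<close> by simp
  qed
  obtain K where K: "\<And>\<mu>. \<mu> \<in> Ms \<Longrightarrow> compact (K \<mu>) \<and> K \<mu> \<subseteq> A \<and> measure \<mu> A < measure \<mu> (K \<mu>) + e / 2"
    using bchoice[OF inner[OF A]] by auto
  obtain L where L: "\<And>\<mu>. \<mu> \<in> Ms \<Longrightarrow> compact (L \<mu>) \<and> L \<mu> \<subseteq> - A \<and> measure \<mu> (- A) < measure \<mu> (L \<mu>) + e / 2"
    using bchoice[OF inner[of "- A"]] A by auto
  define KA where "KA = \<Union>(K ` Ms)"
  define LA where "LA = \<Union>(L ` Ms)"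
  have KL: "compact KA" "compact LA" "KA \<subseteq> A" "LA \<subseteq> - A"
    using K L \<open>finite Ms\<close> by (auto simp: KA_def LA_def intro!: compact_Union)
  then have KL_closed: "closed KA" "closed LA" "KA \<inter> LA = {}"
    by (auto intro: compact_imp_closed)
  obtain h :: "real \<Rightarrow> real" where h: "continuous_on UNIV h" "\<And>x. h x \<in> closed_segment 1 0"
    "\<And>x. x \<in> KA \<Longrightarrow> h x = 1" "\<And>x. x \<in> LA \<Longrightarrow> h x = 0"
    using Urysohn[OF KL_closed] by metis
  have h01: "0 \<le> h x \<and> h x \<le> 1" for x
    using h(2)[of x] by (auto simp: closed_segment_eq_real_ivl)
  show "\<exists>h. (\<forall>x. isCont h x) \<and> (\<exists>C. \<forall>x. \<bar>h x\<bar> \<le> C) \<and> (\<forall>\<mu>\<in>Ms. (\<integral>x. \<bar>indicator A x - h x\<bar> \<partial>\<mu>) < e)"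
  proof (intro exI[of _ h] conjI ballI)
    show "\<forall>x. isCont h x" using h(1) by (simp add: continuous_on_eq_continuous_at)
    show "\<exists>C. \<forall>x. \<bar>h x\<bar> \<le> C" using h01 by (intro exI[of _ 1]) auto
    fix \<mu> assume "\<mu> \<in> Ms"
    interpret real_distribution \<mu> using Ms[OF \<open>\<mu> \<in> Ms\<close>] .
    have sets: "KA \<in> events" "LA \<in> events" "A \<in> events"
      using KL_closed A by auto
    have "integrable \<mu> (\<lambda>x. \<bar>indicator A x - h x\<bar>)"
    proof (rule integrable_bounded_borel)
      show "(\<lambda>x. \<bar>indicator A x - h x\<bar>) \<in> borel_measurable borel"
        using A by (intro borel_measurable_abs borel_measurable_diff borel_measurable_indicator
            borel_measurable_continuous_onI[OF h(1)])
      show "\<bar>\<bar>indicator A x - h x\<bar>\<bar> \<le> 1" for x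
        using h01[of x] by (auto simp: indicator_def)
    qed
    moreover have "\<bar>indicator A x - h x\<bar> \<le> indicator (- (KA \<union> LA)) x" for x
      using h01[of x] h(3,4)[of x] KL by (auto simp: indicator_def)
    ultimately have "(\<integral>x. \<bar>indicator A x - h x\<bar> \<partial>\<mu>) \<le> (\<integral>x. indicator (- (KA \<union> LA)) x \<partial>\<mu>)"
      using sets by (intro integral_mono integrable_indicator_real) auto
    also have "\<dots> = 1 - measure \<mu> KA - measure \<mu> LA"
      using sets KL_closed prob_compl[of "KA \<union> LA"] finite_measure_Union[of KA LA]
      by (simp add: Compl_eq_Diff_UNIV)
    also have "\<dots> < e"
    proof -
      have "measure \<mu> (K \<mu>) \<le> measure \<mu> KA" "measure \<mu> (L \<mu>) \<le> measure \<mu> LA"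
        using K[OF \<open>\<mu> \<in> Ms\<close>] L[OF \<open>\<mu> \<in> Ms\<close>] sets \<open>\<mu> \<in> Ms\<close>
        by (auto intro!: finite_measure_mono simp: KA_def LA_def compact_imp_closed)
      then show ?thesis
        using K[OF \<open>\<mu> \<in> Ms\<close>] L[OF \<open>\<mu> \<in> Ms\<close>] prob_compl[of A] sets
        by (simp add: Compl_eq_Diff_UNIV)
    qed
    finally show "(\<integral>x. \<bar>indicator A x - h x\<bar> \<partial>\<mu>) < e" .
  qed
qed

lemma cont_L1_approx_zero: "cont_L1_approx Ms (\<lambda>x. 0)"
  unfolding cont_L1_approx_def by (auto intro!: exI[of _ "\<lambda>x. 0"] bounded_borel_const)

lemma cont_L1_approx_add:
  assumes f: "cont_L1_approx Ms f" and g: "cont_L1_approx Ms g"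
  shows "cont_L1_approx Ms (\<lambda>x. f x + g x)"
  unfolding cont_L1_approx_def
proof (intro conjI allI impI)
  have bf: "bounded_borel f" and bg: "bounded_borel g"
    using f g by (auto simp: cont_L1_approx_def)
  then show "bounded_borel (\<lambda>x. f x + g x)" by (rule bounded_borel_add)
  fix e :: real assume "0 < e"
  obtain h1 C1 where h1: "\<And>x. isCont h1 x" "\<And>x. \<bar>h1 x\<bar> \<le> C1"
    "\<And>\<mu>. \<mu> \<in> Ms \<Longrightarrow> (\<integral>x. \<bar>f x - h1 x\<bar> \<partial>\<mu>) < e / 2"
    using cont_L1_approxE[OF f, of "e / 2"] \<open>0 < e\<close> by auto
  obtain h2 C2 where h2: "\<And>x. isCont h2 x" "\<And>x. \<bar>h2 x\<bar> \<le> C2"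
    "\<And>\<mu>. \<mu> \<in> Ms \<Longrightarrow> (\<integral>x. \<bar>g x - h2 x\<bar> \<partial>\<mu>) < e / 2"
    using cont_L1_approxE[OF g, of "e / 2"] \<open>0 < e\<close> by auto
  have bh1: "bounded_borel h1" and bh2: "bounded_borel h2"
    using bounded_borel_isCont[OF h1(1,2)] bounded_borel_isCont[OF h2(1,2)] .
  show "\<exists>h. (\<forall>x. isCont h x) \<and> (\<exists>C. \<forall>x. \<bar>h x\<bar> \<le> C) \<and>
      (\<forall>\<mu>\<in>Ms. (\<integral>x. \<bar>f x + g x - h x\<bar> \<partial>\<mu>) < e)"
  proof (intro exI[of _ "\<lambda>x. h1 x + h2 x"] conjI allI ballI exI[of _ "C1 + C2"])
    show "isCont (\<lambda>x. h1 x + h2 x) x" for x using h1(1) h2(1) by (intro continuous_intros)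
    show "\<bar>h1 x + h2 x\<bar> \<le> C1 + C2" for x
      using h1(2)[of x] h2(2)[of x] by linarith
    fix \<mu> assume "\<mu> \<in> Ms"
    interpret real_distribution \<mu> using Ms[OF \<open>\<mu> \<in> Ms\<close>] .
    have "(\<integral>x. \<bar>f x + g x - (h1 x + h2 x)\<bar> \<partial>\<mu>) \<le> (\<integral>x. \<bar>f x - h1 x\<bar> + \<bar>g x - h2 x\<bar> \<partial>\<mu>)"
      using bf bg bh1 bh2 by (intro integral_mono integrable_if_bounded_borel bounded_borel_intros) auto
    also have "\<dots> = (\<integral>x. \<bar>f x - h1 x\<bar> \<partial>\<mu>) + (\<integral>x. \<bar>g x - h2 x\<bar> \<partial>\<mu>)"
      using bf bg bh1 bh2 by (intro Bochner_Integration.integral_add integrable_if_bounded_borel bounded_borel_intros)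
    also have "\<dots> < e"
      using h1(3) h2(3) \<open>\<mu> \<in> Ms\<close> by fastforce
    finally show "(\<integral>x. \<bar>f x + g x - (h1 x + h2 x)\<bar> \<partial>\<mu>) < e" .
  qed
qed

lemma cont_L1_approx_cmult:
  assumes f: "cont_L1_approx Ms f"
  shows "cont_L1_approx Ms (\<lambda>x. a * f x)"
  unfolding cont_L1_approx_def
proof (intro conjI allI impI)
  have bf: "bounded_borel f" using f by (simp add: cont_L1_approx_def)
  then show "bounded_borel (\<lambda>x. a * f x)" by (rule bounded_borel_cmult)
  fix e :: real assume "0 < e"
  obtain h C where h: "\<And>x. isCont h x" "\<And>x. \<bar>h x\<bar> \<le> C"
    "\<And>\<mu>. \<mu> \<in> Ms \<Longrightarrow> (\<integral>x. \<bar>f x - h x\<bar> \<partial>\<mu>) < e / (\<bar>a\<bar> + 1)"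
    using cont_L1_approxE[OF f, of "e / (\<bar>a\<bar> + 1)"] \<open>0 < e\<close> by auto
  show "\<exists>h. (\<forall>x. isCont h x) \<and> (\<exists>C. \<forall>x. \<bar>h x\<bar> \<le> C) \<and>
      (\<forall>\<mu>\<in>Ms. (\<integral>x. \<bar>a * f x - h x\<bar> \<partial>\<mu>) < e)"
  proof (intro exI[of _ "\<lambda>x. a * h x"] conjI allI ballI exI[of _ "\<bar>a\<bar> * C"])
    show "isCont (\<lambda>x. a * h x) x" for x using h(1) by (intro continuous_intros)
    show "\<bar>a * h x\<bar> \<le> \<bar>a\<bar> * C" for x using h(2)[of x] by (simp add: abs_mult mult_left_mono)
    fix \<mu> assume "\<mu> \<in> Ms"
    have "(\<integral>x. \<bar>a * f x - a * h x\<bar> \<partial>\<mu>) = \<bar>a\<bar> * (\<integral>x. \<bar>f x - h x\<bar> \<partial>\<mu>)"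
      by (simp add: abs_mult flip: right_diff_distrib)
    also have "\<dots> \<le> \<bar>a\<bar> * (e / (\<bar>a\<bar> + 1))"
      using h(3)[OF \<open>\<mu> \<in> Ms\<close>] by (intro mult_left_mono) auto
    also have "\<dots> < e"
      using \<open>0 < e\<close> by (simp add: field_simps)
    finally show "(\<integral>x. \<bar>a * f x - a * h x\<bar> \<partial>\<mu>) < e" .
  qed
qed

lemma cont_L1_approx_sum:
  "finite J \<Longrightarrow> (\<And>j. j \<in> J \<Longrightarrow> cont_L1_approx Ms (u j)) \<Longrightarrow> cont_L1_approx Ms (\<lambda>x. \<Sum>j\<in>J. u j x)"
  by (induction J rule: finite_induct) (auto intro: cont_L1_approx_zero cont_L1_approx_add)

lemma cont_L1_approx_uniform_limit:
  assumes bf: "bounded_borel f"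
    and approx: "\<And>d. 0 < d \<Longrightarrow> \<exists>g. cont_L1_approx Ms g \<and> (\<forall>x. \<bar>f x - g x\<bar> \<le> d)"
  shows "cont_L1_approx Ms f"
  unfolding cont_L1_approx_def
proof (intro conjI allI impI bf)
  fix e :: real assume "0 < e"
  obtain g where g: "cont_L1_approx Ms g" "\<And>x. \<bar>f x - g x\<bar> \<le> e / 2"
    using approx[of "e / 2"] \<open>0 < e\<close> by auto
  obtain h C where h: "\<And>x. isCont h x" "\<And>x. \<bar>h x\<bar> \<le> C"
    "\<And>\<mu>. \<mu> \<in> Ms \<Longrightarrow> (\<integral>x. \<bar>g x - h x\<bar> \<partial>\<mu>) < e / 2"
    using cont_L1_approxE[OF g(1), of "e / 2"] \<open>0 < e\<close> by auto
  have bg: "bounded_borel g" and bh: "bounded_borel h"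
    using g(1) bounded_borel_isCont[OF h(1,2)] by (auto simp: cont_L1_approx_def)
  have pointwise: "\<bar>f x - h x\<bar> \<le> e / 2 + \<bar>g x - h x\<bar>" for x
    using g(2)[of x] by linarith
  show "\<exists>h. (\<forall>x. isCont h x) \<and> (\<exists>C. \<forall>x. \<bar>h x\<bar> \<le> C) \<and> (\<forall>\<mu>\<in>Ms. (\<integral>x. \<bar>f x - h x\<bar> \<partial>\<mu>) < e)"
  proof (intro exI[of _ h] conjI ballI)
    fix \<mu> assume "\<mu> \<in> Ms"
    interpret real_distribution \<mu> using Ms[OF \<open>\<mu> \<in> Ms\<close>] .
    have "(\<integral>x. \<bar>f x - h x\<bar> \<partial>\<mu>) \<le> (\<integral>x. e / 2 + \<bar>g x - h x\<bar> \<partial>\<mu>)"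
      using bf bg bh pointwise by (intro integral_mono integrable_if_bounded_borel bounded_borel_intros)
    also have "\<dots> = e / 2 + (\<integral>x. \<bar>g x - h x\<bar> \<partial>\<mu>)"
      using bg bh prob_space by (simp add: integrable_if_bounded_borel bounded_borel_intros)
    finally show "(\<integral>x. \<bar>f x - h x\<bar> \<partial>\<mu>) < e"
      using h(3)[OF \<open>\<mu> \<in> Ms\<close>] by linarith
  qed (use h in auto)
qed

context
  assumes finite_Ms: "finite Ms"
begin

lemma cont_L1_approx_bounded_borel:
  assumes bf: "bounded_borel f"
  shows "cont_L1_approx Ms f"
proof (rule cont_L1_approx_uniform_limit[OF bf])
  fix d :: real assume "0 < d"
  obtain M where [measurable]: "f \<in> borel_measurable borel" and M: "\<And>x. \<bar>f x\<bar> \<le> M"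
    using bf by (meson bounded_borelE)
  define J where "J = {-\<lceil>M / d\<rceil> .. \<lceil>M / d\<rceil>}"
  define g where "g x = d * of_int \<lfloor>f x / d\<rfloor>" for x
  have "\<lfloor>f x / d\<rfloor> \<in> J" for x
  proof -
    have "- (M / d) \<le> f x / d" "f x / d \<le> M / d"
      using divide_right_mono[of "- M" "f x" d] divide_right_mono[of "f x" M d] M[of x] \<open>0 < d\<close>
      by (auto simp: abs_le_iff)
    then have "\<lfloor>- (M / d)\<rfloor> \<le> \<lfloor>f x / d\<rfloor>" "\<lfloor>f x / d\<rfloor> \<le> \<lfloor>M / d\<rfloor>"
      by (simp_all only: floor_mono)
    then show ?thesis
      using floor_le_ceiling[of "M / d"] by (simp add: J_def ceiling_def)
  qed
  then have "g x = (\<Sum>j\<in>J. d * of_int j * indicator {x. \<lfloor>f x / d\<rfloor> = j} x)" for x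
    by (simp add: g_def indicator_def if_distrib[of "\<lambda>c. _ * c"] sum.If_cases J_def)
  then have g_sum: "g = (\<lambda>x. \<Sum>j\<in>J. d * of_int j * indicator {x. \<lfloor>f x / d\<rfloor> = j} x)"
    by (rule ext)
  have "{x. \<lfloor>f x / d\<rfloor> = j} \<in> sets borel" for j
    by measurable
  then have "cont_L1_approx Ms g"
    unfolding g_sum
    by (intro cont_L1_approx_sum cont_L1_approx_cmult cont_L1_approx_indicator[OF finite_Ms]) (auto simp: J_def)
  moreover have "\<bar>f x - g x\<bar> \<le> d" for x
  proof -
    have "d * of_int \<lfloor>f x / d\<rfloor> \<le> d * (f x / d)" "d * (f x / d) < d * (of_int \<lfloor>f x / d\<rfloor> + 1)"
      using \<open>0 < d\<close> by (intro mult_left_mono mult_strict_left_mono; simp)+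
    then show ?thesis
      using \<open>0 < d\<close> by (simp add: g_def algebra_simps)
  qed
  ultimately show "\<exists>g. cont_L1_approx Ms g \<and> (\<forall>x. \<bar>f x - g x\<bar> \<le> d)" by blast
qed

lemma exists_continuous_L1_approx:
  fixes f :: "real \<Rightarrow> real"
  assumes "f \<in> borel_measurable borel" "\<And>x. \<bar>f x\<bar> \<le> M" "0 < e"
  obtains h where "\<And>x. isCont h x" "\<And>x. \<bar>h x\<bar> \<le> M"
    "\<And>\<mu>. \<mu> \<in> Ms \<Longrightarrow> (\<integral>x. \<bar>f x - h x\<bar> \<partial>\<mu>) < e"
proof -
  have bf: "bounded_borel f" using assms(1,2) by (rule bounded_borelI)
  obtain h C where h: "\<And>x. isCont h x" "\<And>x. \<bar>h x\<bar> \<le> C"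
    "\<And>\<mu>. \<mu> \<in> Ms \<Longrightarrow> (\<integral>x. \<bar>f x - h x\<bar> \<partial>\<mu>) < e"
    using cont_L1_approxE[OF cont_L1_approx_bounded_borel[OF bf] \<open>0 < e\<close>] by blast
  define h' where "h' x = max (- M) (min M (h x))" for x
  have h'_cont: "isCont h' x" for x unfolding h'_def using h(1) by (intro continuous_intros)
  have h'_bound: "\<bar>h' x\<bar> \<le> M" for x using assms(2)[of x] unfolding h'_def by auto
  show ?thesis
  proof (rule that[OF h'_cont h'_bound])
    fix \<mu> assume "\<mu> \<in> Ms"
    interpret real_distribution \<mu> using Ms[OF \<open>\<mu> \<in> Ms\<close>] .
    have "bounded_borel h" "bounded_borel h'"
      using bounded_borel_isCont[OF h(1,2)] bounded_borel_isCont[OF h'_cont h'_bound] .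
    moreover have "\<bar>f x - h' x\<bar> \<le> \<bar>f x - h x\<bar>" for x
      using assms(2)[of x] by (auto simp: h'_def)
    ultimately have "(\<integral>x. \<bar>f x - h' x\<bar> \<partial>\<mu>) \<le> (\<integral>x. \<bar>f x - h x\<bar> \<partial>\<mu>)"
      using bf by (intro integral_mono integrable_if_bounded_borel bounded_borel_intros)
    then show "(\<integral>x. \<bar>f x - h' x\<bar> \<partial>\<mu>) < e"
      using h(3)[OF \<open>\<mu> \<in> Ms\<close>] by linarith
  qed
qed

end

end

subsection \<open>The Donsker--Varadhan variational formula\<close>

definition donsker_varadhan :: "(real \<Rightarrow> real) \<Rightarrow> real measure \<Rightarrow> real measure \<Rightarrow> real" where
  "donsker_varadhan f \<eta> \<kappa> = (\<integral>x. f x \<partial>\<eta>) - ln (\<integral>x. exp (f x) \<partial>\<kappa>)"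

definition real_density :: "real measure \<Rightarrow> real measure \<Rightarrow> real \<Rightarrow> real" where
  "real_density \<eta> \<kappa> x = enn2real (RN_deriv \<kappa> \<eta> x)"

lemma KL_eq_real_density:
  "KL \<eta> \<kappa> = (if absolutely_continuous \<kappa> \<eta> \<and> integrable \<eta> (\<lambda>x. ln (real_density \<eta> \<kappa> x))
     then ereal (\<integral>x. ln (real_density \<eta> \<kappa> x) \<partial>\<eta>) else \<infinity>)"
  by (simp add: KL_def real_density_def)

lemma mult_ln_ratio_le:
  fixes g Z f :: real
  assumes "0 \<le> g" "0 < Z"
  shows "g * (f - ln g - ln Z) \<le> exp f / Z - g"
proof (cases "g = 0")
  case False
  then have "0 < g" using assms by simp
  have "f - ln g - ln Z = ln (exp f / (g * Z))"
    using \<open>0 < g\<close> assms by (simp add: ln_div ln_mult)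
  also have "\<dots> \<le> exp f / (g * Z) - 1"
    using \<open>0 < g\<close> assms by (intro ln_le_minus_one) auto
  finally have "g * (f - ln g - ln Z) \<le> g * (exp f / (g * Z) - 1)"
    using \<open>0 < g\<close> by (intro mult_left_mono) auto
  also have "\<dots> = exp f / Z - g" using \<open>0 < g\<close> assms by (simp add: field_simps)
  finally show ?thesis .
qed (use assms in simp)

lemma exp_diff_le:
  fixes a b C :: real
  assumes "a \<le> C"
  shows "exp a - exp b \<le> exp C * \<bar>a - b\<bar>"
proof -
  have "exp a * (1 + (b - a)) \<le> exp a * exp (b - a)"
    by (intro mult_left_mono exp_ge_add_one_self) auto
  then have "exp a - exp b \<le> exp a * (a - b)"
    by (simp add: algebra_simps flip: exp_add)
  also have "\<dots> \<le> exp a * \<bar>a - b\<bar>"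
    by (intro mult_left_mono) auto
  also have "\<dots> \<le> exp C * \<bar>a - b\<bar>"
    using assms by (intro mult_right_mono) auto
  finally show ?thesis .
qed

lemma mult_neg_ln_le_one:
  fixes g :: real
  assumes "0 \<le> g"
  shows "g * max 0 (- ln g) \<le> 1"
proof (cases "0 < g \<and> g < 1")
  case True
  have "- ln g = ln (1 / g)" using True by (simp add: ln_div)
  also have "\<dots> \<le> 1 / g - 1" using True by (intro ln_le_minus_one) auto
  finally have "g * (- ln g) \<le> g * (1 / g - 1)" using True by (intro mult_left_mono) auto
  then show ?thesis using True by (simp add: max_def right_diff_distrib)
qed (use assms in \<open>auto simp: max_def\<close>)

context real_distribution
begin

lemma
  fixes f :: "real \<Rightarrow> real"
  assumes "f \<in> borel_measurable borel" "\<And>x. \<bar>f x\<bar> \<le> C"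
  shows integrable_exp_bounded: "integrable M (\<lambda>x. exp (f x))"
    and integral_exp_bounded_ge: "exp (- C) \<le> (\<integral>x. exp (f x) \<partial>M)"
proof -
  have [measurable]: "f \<in> borel_measurable borel" by fact
  show int: "integrable M (\<lambda>x. exp (f x))"
    using assms(2) by (intro integrable_bounded_borel[where C = "exp C"]) (auto simp: abs_le_iff)
  have "- C \<le> f x" for x
    using assms(2)[of x] by linarith
  then have "(\<integral>x. exp (- C) \<partial>M) \<le> (\<integral>x. exp (f x) \<partial>M)"
    by (intro integral_mono[OF integrable_const int]) auto
  then show "exp (- C) \<le> (\<integral>x. exp (f x) \<partial>M)" using prob_space by simp
qed

lemma integral_exp_bounded_pos:
  fixes f :: "real \<Rightarrow> real"
  assumes "f \<in> borel_measurable borel" "\<And>x. \<bar>f x\<bar> \<le> C"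
  shows "0 < (\<integral>x. exp (f x) \<partial>M)"
  using integral_exp_bounded_ge[OF assms] exp_gt_zero[of "- C"] by linarith

lemma
  fixes g u :: "real \<Rightarrow> real"
  assumes "g \<in> borel_measurable borel" "\<And>x. 0 \<le> g x" "u \<in> borel_measurable borel"
  shows integrable_density_real_iff:
      "integrable (density M (\<lambda>x. ennreal (g x))) u \<longleftrightarrow> integrable M (\<lambda>x. g x * u x)"
    and integral_density_real: "(\<integral>x. u x \<partial>density M (\<lambda>x. ennreal (g x))) = (\<integral>x. g x * u x \<partial>M)"
  using integrable_density[of u M g] integral_density[of u M g] assms
  by (simp_all add: borel_measurable_of_borel)

end

lemma
  assumes \<eta>: "real_distribution \<eta>" and \<kappa>: "real_distribution \<kappa>" and ac: "absolutely_continuous \<kappa> \<eta>"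
  shows borel_measurable_real_density: "real_density \<eta> \<kappa> \<in> borel_measurable borel"
    and density_real_density: "\<eta> = density \<kappa> (\<lambda>x. ennreal (real_density \<eta> \<kappa> x))"
proof -
  interpret K: real_distribution \<kappa> by fact
  interpret E: real_distribution \<eta> by fact
  have sets: "sets \<eta> = sets \<kappa>" by (simp add: E.events_eq_borel K.events_eq_borel)
  have [measurable]: "RN_deriv \<kappa> \<eta> \<in> borel_measurable borel"
    using borel_measurable_RN_deriv[of \<kappa> \<eta>] measurable_cong_sets[OF K.events_eq_borel refl] by simp
  show "real_density \<eta> \<kappa> \<in> borel_measurable borel"
    unfolding real_density_def[abs_def] by measurable
  have "\<eta> = density \<kappa> (RN_deriv \<kappa> \<eta>)"
    using K.density_RN_deriv[OF ac sets] by simp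
  also have "\<dots> = density \<kappa> (\<lambda>x. ennreal (real_density \<eta> \<kappa> x))"
  proof (rule density_cong)
    show "(\<lambda>x. ennreal (real_density \<eta> \<kappa> x)) \<in> borel_measurable \<kappa>"
      unfolding real_density_def by (intro K.borel_measurable_of_borel) measurable
    have "AE x in \<kappa>. RN_deriv \<kappa> \<eta> x \<noteq> \<infinity>"
      by (rule K.RN_deriv_finite[OF _ ac sets]) unfold_locales
    then show "AE x in \<kappa>. RN_deriv \<kappa> \<eta> x = ennreal (real_density \<eta> \<kappa> x)"
      by eventually_elim (auto simp: real_density_def ennreal_enn2real_if)
  qed simp
  finally show "\<eta> = density \<kappa> (\<lambda>x. ennreal (real_density \<eta> \<kappa> x))" .
qed

context
  fixes \<eta> \<kappa> :: "real measure"
  assumes \<eta>: "real_distribution \<eta>" and \<kappa>: "real_distribution \<kappa>" and ac: "absolutely_continuous \<kappa> \<eta>"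
begin

lemma
  fixes u :: "real \<Rightarrow> real"
  assumes "u \<in> borel_measurable borel"
  shows integrable_iff_real_density: "integrable \<eta> u \<longleftrightarrow> integrable \<kappa> (\<lambda>x. real_density \<eta> \<kappa> x * u x)"
    and integral_eq_real_density: "(\<integral>x. u x \<partial>\<eta>) = (\<integral>x. real_density \<eta> \<kappa> x * u x \<partial>\<kappa>)"
proof -
  define \<rho> where "\<rho> = real_density \<eta> \<kappa>"
  have \<eta>_eq: "\<eta> = density \<kappa> (\<lambda>x. ennreal (\<rho> x))"
    unfolding \<rho>_def by (rule density_real_density[OF \<eta> \<kappa> ac])
  have \<rho>: "\<rho> \<in> borel_measurable borel" "\<And>x. 0 \<le> \<rho> x"
    using borel_measurable_real_density[OF \<eta> \<kappa> ac] by (auto simp: \<rho>_def real_density_def)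
  have "integrable \<eta> u \<longleftrightarrow> integrable \<kappa> (\<lambda>x. \<rho> x * u x)"
    by (subst \<eta>_eq) (rule real_distribution.integrable_density_real_iff[OF \<kappa> \<rho> assms])
  moreover have "(\<integral>x. u x \<partial>\<eta>) = (\<integral>x. \<rho> x * u x \<partial>\<kappa>)"
    by (subst \<eta>_eq) (rule real_distribution.integral_density_real[OF \<kappa> \<rho> assms])
  ultimately show "integrable \<eta> u \<longleftrightarrow> integrable \<kappa> (\<lambda>x. real_density \<eta> \<kappa> x * u x)"
    and "(\<integral>x. u x \<partial>\<eta>) = (\<integral>x. real_density \<eta> \<kappa> x * u x \<partial>\<kappa>)"
    by (simp_all add: \<rho>_def)
qed

lemma integrable_real_density: "integrable \<kappa> (real_density \<eta> \<kappa>)"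
  and integral_real_density: "(\<integral>x. real_density \<eta> \<kappa> x \<partial>\<kappa>) = 1"
proof -
  interpret real_distribution \<eta> by (rule \<eta>)
  show "integrable \<kappa> (real_density \<eta> \<kappa>)" "(\<integral>x. real_density \<eta> \<kappa> x \<partial>\<kappa>) = 1"
    using integrable_iff_real_density[of "\<lambda>_. 1"] integral_eq_real_density[of "\<lambda>_. 1"] prob_space
    by simp_all
qed

lemma AE_real_density_pos: "AE x in \<eta>. 0 < real_density \<eta> \<kappa> x"
proof -
  have "AE x in density \<kappa> (\<lambda>x. ennreal (real_density \<eta> \<kappa> x)). 0 < real_density \<eta> \<kappa> x"
    using borel_measurable_real_density[OF \<eta> \<kappa> ac]
    by (subst AE_density) (auto intro!: real_distribution.borel_measurable_of_borel[OF \<kappa>])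
  then show ?thesis by (subst density_real_density[OF \<eta> \<kappa> ac])
qed

end

lemma donsker_varadhan_le_KL:
  fixes f :: "real \<Rightarrow> real"
  assumes \<eta>: "real_distribution \<eta>" and \<kappa>: "real_distribution \<kappa>"
    and f: "f \<in> borel_measurable borel" "\<And>x. \<bar>f x\<bar> \<le> C"
  shows "ereal (donsker_varadhan f \<eta> \<kappa>) \<le> KL \<eta> \<kappa>"
proof (cases "absolutely_continuous \<kappa> \<eta> \<and> integrable \<eta> (\<lambda>x. ln (real_density \<eta> \<kappa> x))")
  case True
  interpret K: real_distribution \<kappa> by fact
  interpret E: real_distribution \<eta> by fact
  define \<rho> where "\<rho> = real_density \<eta> \<kappa>"
  have ac: "absolutely_continuous \<kappa> \<eta>" and ln_\<rho>: "integrable \<eta> (\<lambda>x. ln (\<rho> x))"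
    using True by (simp_all add: \<rho>_def)
  have [measurable]: "\<rho> \<in> borel_measurable borel" "f \<in> borel_measurable borel"
    using borel_measurable_real_density[OF \<eta> \<kappa> ac] f(1) by (simp_all add: \<rho>_def)
  have \<rho>_nonneg: "0 \<le> \<rho> x" for x by (simp add: \<rho>_def real_density_def)
  define Z where "Z = (\<integral>x. exp (f x) \<partial>\<kappa>)"
  have Z: "0 < Z" "integrable \<kappa> (\<lambda>x. exp (f x))"
    using K.integral_exp_bounded_pos[OF f] K.integrable_exp_bounded[OF f] by (simp_all add: Z_def)
  define u where "u x = f x - ln (\<rho> x) - ln Z" for x
  have u_int: "integrable \<eta> u"
    unfolding u_def using E.integrable_bounded_borel[OF f] ln_\<rho> by simp
  have [measurable]: "u \<in> borel_measurable borel" unfolding u_def by measurable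
  have "(\<integral>x. u x \<partial>\<eta>) = (\<integral>x. \<rho> x * u x \<partial>\<kappa>)"
    unfolding \<rho>_def by (rule integral_eq_real_density[OF \<eta> \<kappa> ac]) measurable
  also have "\<dots> \<le> (\<integral>x. exp (f x) / Z - \<rho> x \<partial>\<kappa>)"
  proof (rule integral_mono)
    show "integrable \<kappa> (\<lambda>x. \<rho> x * u x)"
      using u_int integrable_iff_real_density[OF \<eta> \<kappa> ac, of u] by (simp add: \<rho>_def)
    show "integrable \<kappa> (\<lambda>x. exp (f x) / Z - \<rho> x)"
      using Z integrable_real_density[OF \<eta> \<kappa> ac] by (simp add: \<rho>_def)
    show "\<rho> x * u x \<le> exp (f x) / Z - \<rho> x" for x
      unfolding u_def by (rule mult_ln_ratio_le[OF \<rho>_nonneg \<open>0 < Z\<close>])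
  qed
  also have "\<dots> = 0"
    using Z integrable_real_density[OF \<eta> \<kappa> ac] integral_real_density[OF \<eta> \<kappa> ac]
    by (simp add: Z_def[symmetric] \<rho>_def)
  finally have "(\<integral>x. f x \<partial>\<eta>) - (\<integral>x. ln (\<rho> x) \<partial>\<eta>) - ln Z \<le> 0"
    using E.integrable_bounded_borel[OF f] ln_\<rho> E.prob_space by (simp add: u_def)
  then show ?thesis
    using True by (simp add: KL_eq_real_density donsker_varadhan_def Z_def \<rho>_def)
qed (auto simp: KL_eq_real_density)

lemma donsker_varadhan_diff_le:
  fixes f h :: "real \<Rightarrow> real"
  assumes \<eta>: "real_distribution \<eta>" and \<kappa>: "real_distribution \<kappa>"
    and f: "f \<in> borel_measurable borel" "\<And>x. \<bar>f x\<bar> \<le> C"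
    and h: "h \<in> borel_measurable borel" "\<And>x. \<bar>h x\<bar> \<le> C"
  shows "donsker_varadhan f \<eta> \<kappa> - donsker_varadhan h \<eta> \<kappa>
    \<le> (\<integral>x. \<bar>f x - h x\<bar> \<partial>\<eta>) + exp (2 * C) * (\<integral>x. \<bar>f x - h x\<bar> \<partial>\<kappa>)"
proof -
  interpret K: real_distribution \<kappa> by fact
  interpret E: real_distribution \<eta> by fact
  have bf: "bounded_borel f" and bh: "bounded_borel h"
    using f h by (auto intro: bounded_borelI)
  have "(\<integral>x. f x \<partial>\<eta>) - (\<integral>x. h x \<partial>\<eta>) = (\<integral>x. f x - h x \<partial>\<eta>)"
    using bf bh by (simp add: E.integrable_if_bounded_borel)
  also have "\<dots> \<le> (\<integral>x. \<bar>f x - h x\<bar> \<partial>\<eta>)"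
    using bf bh by (intro integral_mono E.integrable_if_bounded_borel bounded_borel_intros) auto
  finally have mean: "(\<integral>x. f x \<partial>\<eta>) - (\<integral>x. h x \<partial>\<eta>) \<le> (\<integral>x. \<bar>f x - h x\<bar> \<partial>\<eta>)" .
  define Zf Zh I where "Zf = (\<integral>x. exp (f x) \<partial>\<kappa>)" and "Zh = (\<integral>x. exp (h x) \<partial>\<kappa>)"
    and "I = (\<integral>x. \<bar>f x - h x\<bar> \<partial>\<kappa>)"
  have Zf: "exp (- C) \<le> Zf" "0 < Zf" and Zh: "0 < Zh"
    using K.integral_exp_bounded_ge[OF f] K.integral_exp_bounded_pos[OF f] K.integral_exp_bounded_pos[OF h]
    by (simp_all add: Zf_def Zh_def)
  have "I \<ge> 0" unfolding I_def by simp
  have "Zh - Zf = (\<integral>x. exp (h x) - exp (f x) \<partial>\<kappa>)"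
    using K.integrable_exp_bounded[OF f] K.integrable_exp_bounded[OF h] by (simp add: Zf_def Zh_def)
  also have "\<dots> \<le> (\<integral>x. exp C * \<bar>f x - h x\<bar> \<partial>\<kappa>)"
  proof (rule integral_mono)
    show "integrable \<kappa> (\<lambda>x. exp (h x) - exp (f x))"
      using K.integrable_exp_bounded[OF f] K.integrable_exp_bounded[OF h] by simp
    show "integrable \<kappa> (\<lambda>x. exp C * \<bar>f x - h x\<bar>)"
      using bf bh by (intro integrable_mult_right K.integrable_if_bounded_borel bounded_borel_intros)
    show "exp (h x) - exp (f x) \<le> exp C * \<bar>f x - h x\<bar>" for x
      using exp_diff_le[of "h x" C "f x"] h(2)[of x] by (simp add: abs_le_iff abs_minus_commute)
  qed
  finally have "Zh - Zf \<le> exp C * I" by (simp add: I_def)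
  have "ln Zh - ln Zf \<le> Zh / Zf - 1"
    using ln_le_minus_one[of "Zh / Zf"] Zf Zh by (simp add: ln_div)
  also have "\<dots> = (Zh - Zf) / Zf" using Zf by (simp add: field_simps)
  also have "\<dots> \<le> exp C * I / Zf"
    using \<open>Zh - Zf \<le> exp C * I\<close> Zf by (intro divide_right_mono) auto
  also have "\<dots> \<le> exp C * I * exp C"
  proof -
    have "1 \<le> exp C * Zf" using Zf mult_left_mono[OF Zf(1), of "exp C"] by (simp add: exp_minus_inverse)
    then have "exp C * I * 1 \<le> exp C * I * (exp C * Zf)"
      using \<open>I \<ge> 0\<close> by (intro mult_left_mono) auto
    then show ?thesis using Zf by (simp add: divide_le_eq mult_ac)
  qed
  also have "\<dots> = exp (2 * C) * I" by (simp add: mult_ac flip: exp_add)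
  finally show ?thesis
    using mean by (simp add: donsker_varadhan_def Zf_def Zh_def I_def)
qed

lemma donsker_varadhan_unbounded_if_not_absolutely_continuous:
  assumes \<eta>: "real_distribution \<eta>" and \<kappa>: "real_distribution \<kappa>"
    and not_ac: "\<not> absolutely_continuous \<kappa> \<eta>"
  shows "\<exists>f C. f \<in> borel_measurable borel \<and> (\<forall>x. \<bar>f x\<bar> \<le> C) \<and> c < donsker_varadhan f \<eta> \<kappa>"
proof -
  interpret K: real_distribution \<kappa> by fact
  interpret E: real_distribution \<eta> by fact
  obtain A where A: "A \<in> null_sets \<kappa>" "A \<notin> null_sets \<eta>"
    using not_ac unfolding absolutely_continuous_def by auto
  then have "A \<in> sets borel" "0 < measure \<eta> A"
    using E.emeasure_eq_measure[of A] by (auto simp: null_sets_def zero_less_measure_iff)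
  define T where "T = (\<bar>c\<bar> + 1) / measure \<eta> A"
  define f where "f x = T * indicator A x" for x :: real
  have "0 < T" using \<open>0 < measure \<eta> A\<close> by (simp add: T_def)
  have [measurable]: "f \<in> borel_measurable borel"
    unfolding f_def[abs_def] using \<open>A \<in> sets borel\<close> by measurable
  have "\<bar>f x\<bar> \<le> T" for x using \<open>0 < T\<close> by (simp add: f_def indicator_def)
  moreover have "(\<integral>x. exp (f x) \<partial>\<kappa>) = 1"
  proof -
    have "(\<integral>x. exp (f x) \<partial>\<kappa>) = (\<integral>x. 1 \<partial>\<kappa>)"
    proof (rule integral_cong_AE)
      show "(\<lambda>x. exp (f x)) \<in> borel_measurable \<kappa>"
        by (intro K.borel_measurable_of_borel) measurable
      show "AE x in \<kappa>. exp (f x) = 1"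
        using AE_not_in[OF A(1)] by eventually_elim (simp add: f_def)
    qed simp
    then show ?thesis using K.prob_space by simp
  qed
  moreover have "(\<integral>x. f x \<partial>\<eta>) = \<bar>c\<bar> + 1"
    using \<open>0 < measure \<eta> A\<close> \<open>A \<in> sets borel\<close> by (simp add: f_def T_def)
  ultimately show ?thesis
    by (intro exI[of _ f] exI[of _ T]) (auto simp: donsker_varadhan_def)
qed

text \<open>Flooring the density at \<open>exp (- N)\<close> keeps the logarithm bounded (and away from the junk
  value \<open>ln 0 = 0\<close>) while \<open>exp\<close> of the truncation stays below the density plus \<open>exp (- N)\<close>.\<close>

definition truncated_log_density :: "real measure \<Rightarrow> real measure \<Rightarrow> nat \<Rightarrow> real \<Rightarrow> real" where
  "truncated_log_density \<eta> \<kappa> N x = min (real N) (ln (max (real_density \<eta> \<kappa> x) (exp (- real N))))"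

context
  fixes \<eta> \<kappa> :: "real measure"
  assumes \<eta>: "real_distribution \<eta>" and \<kappa>: "real_distribution \<kappa>" and ac: "absolutely_continuous \<kappa> \<eta>"
begin

lemma
  shows borel_measurable_truncated_log_density:
      "truncated_log_density \<eta> \<kappa> N \<in> borel_measurable borel"
    and abs_truncated_log_density_le: "\<bar>truncated_log_density \<eta> \<kappa> N x\<bar> \<le> real N"
proof -
  have [measurable]: "real_density \<eta> \<kappa> \<in> borel_measurable borel"
    by (rule borel_measurable_real_density[OF \<eta> \<kappa> ac])
  show "truncated_log_density \<eta> \<kappa> N \<in> borel_measurable borel"
    unfolding truncated_log_density_def[abs_def] by measurable
  have "- real N \<le> ln (max (real_density \<eta> \<kappa> x) (exp (- real N)))"
    by (simp add: ln_ge_iff less_max_iff_disj)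
  then show "\<bar>truncated_log_density \<eta> \<kappa> N x\<bar> \<le> real N"
    by (auto simp: truncated_log_density_def)
qed

lemma integrable_neg_part_ln_real_density: "integrable \<eta> (\<lambda>x. max 0 (- ln (real_density \<eta> \<kappa> x)))"
proof -
  have [measurable]: "real_density \<eta> \<kappa> \<in> borel_measurable borel"
    by (rule borel_measurable_real_density[OF \<eta> \<kappa> ac])
  have "integrable \<kappa> (\<lambda>x. real_density \<eta> \<kappa> x * max 0 (- ln (real_density \<eta> \<kappa> x)))"
  proof (rule real_distribution.integrable_bounded_borel[OF \<kappa>, where C = 1])
    show "(\<lambda>x. real_density \<eta> \<kappa> x * max 0 (- ln (real_density \<eta> \<kappa> x))) \<in> borel_measurable borel"
      by measurable
    show "\<bar>real_density \<eta> \<kappa> x * max 0 (- ln (real_density \<eta> \<kappa> x))\<bar> \<le> 1" for x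
      using mult_neg_ln_le_one[of "real_density \<eta> \<kappa> x"] by (simp add: real_density_def)
  qed
  then show ?thesis by (subst integrable_iff_real_density[OF \<eta> \<kappa> ac]) auto
qed

lemma donsker_varadhan_truncated_log_density_ge:
  "(\<integral>x. min (real N) (max 0 (ln (real_density \<eta> \<kappa> x))) \<partial>\<eta>)
     - (\<integral>x. max 0 (- ln (real_density \<eta> \<kappa> x)) \<partial>\<eta>) - exp (- real N)
   \<le> donsker_varadhan (truncated_log_density \<eta> \<kappa> N) \<eta> \<kappa>"
proof -
  interpret K: real_distribution \<kappa> by fact
  interpret E: real_distribution \<eta> by fact
  define \<rho> where "\<rho> = real_density \<eta> \<kappa>"
  define f where "f = truncated_log_density \<eta> \<kappa> N"
  have [measurable]: "\<rho> \<in> borel_measurable borel"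
    using borel_measurable_real_density[OF \<eta> \<kappa> ac] by (simp add: \<rho>_def)
  have f_meas[measurable]: "f \<in> borel_measurable borel"
    using borel_measurable_truncated_log_density by (simp add: f_def)
  have f_bound: "\<bar>f x\<bar> \<le> real N" for x
    unfolding f_def by (rule abs_truncated_log_density_le)
  have pos_int: "integrable \<eta> (\<lambda>x. min (real N) (max 0 (ln (\<rho> x))))"
    by (intro E.integrable_bounded_borel[where C = "real N"]) auto
  have "(\<integral>x. min (real N) (max 0 (ln (\<rho> x))) \<partial>\<eta>) - (\<integral>x. max 0 (- ln (\<rho> x)) \<partial>\<eta>)
      = (\<integral>x. min (real N) (max 0 (ln (\<rho> x))) - max 0 (- ln (\<rho> x)) \<partial>\<eta>)"
    using pos_int integrable_neg_part_ln_real_density by (simp add: \<rho>_def)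
  also have "\<dots> \<le> (\<integral>x. f x \<partial>\<eta>)"
  proof (rule integral_mono_AE)
    show "integrable \<eta> (\<lambda>x. min (real N) (max 0 (ln (\<rho> x))) - max 0 (- ln (\<rho> x)))"
      using pos_int integrable_neg_part_ln_real_density by (simp add: \<rho>_def)
    show "integrable \<eta> f" using f_bound by (intro E.integrable_bounded_borel) auto
    show "AE x in \<eta>. min (real N) (max 0 (ln (\<rho> x))) - max 0 (- ln (\<rho> x)) \<le> f x"
      using AE_real_density_pos[OF \<eta> \<kappa> ac]
    proof eventually_elim
      case (elim x)
      then have "0 < \<rho> x" by (simp add: \<rho>_def)
      have "ln (\<rho> x) \<le> ln (max (\<rho> x) (exp (- real N)))" using \<open>0 < \<rho> x\<close> by simp
      then show ?case
        by (auto simp: f_def truncated_log_density_def \<rho>_def[symmetric] max_def min_def split: if_splits)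
    qed
  qed
  finally have mean: "(\<integral>x. min (real N) (max 0 (ln (\<rho> x))) \<partial>\<eta>) - (\<integral>x. max 0 (- ln (\<rho> x)) \<partial>\<eta>)
      \<le> (\<integral>x. f x \<partial>\<eta>)" .
  have "(\<integral>x. exp (f x) \<partial>\<kappa>) \<le> (\<integral>x. \<rho> x + exp (- real N) \<partial>\<kappa>)"
  proof (rule integral_mono)
    show "integrable \<kappa> (\<lambda>x. exp (f x))" by (rule K.integrable_exp_bounded[OF f_meas f_bound])
    show "integrable \<kappa> (\<lambda>x. \<rho> x + exp (- real N))"
      using integrable_real_density[OF \<eta> \<kappa> ac] by (simp add: \<rho>_def)
    have "exp (f x) \<le> max (\<rho> x) (exp (- real N))" for x
    proof -
      have "0 < max (\<rho> x) (exp (- real N))" by (simp add: less_max_iff_disj)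
      then show ?thesis
        unfolding f_def truncated_log_density_def \<rho>_def[symmetric]
        by (metis exp_le_cancel_iff exp_ln min.cobounded2)
    qed
    then show "exp (f x) \<le> \<rho> x + exp (- real N)" for x
      using \<rho>_def real_density_def by (smt (verit) enn2real_nonneg exp_gt_zero)
  qed
  also have "\<dots> = 1 + exp (- real N)"
    using integrable_real_density[OF \<eta> \<kappa> ac] integral_real_density[OF \<eta> \<kappa> ac] K.prob_space
    by (simp add: \<rho>_def)
  finally have "ln (\<integral>x. exp (f x) \<partial>\<kappa>) \<le> exp (- real N)"
    using K.integral_exp_bounded_pos[OF f_meas f_bound] ln_add_one_self_le_self[of "exp (- real N)"]
    by (smt (verit) exp_gt_zero ln_le_cancel_iff)
  then show ?thesis
    using mean by (simp add: donsker_varadhan_def f_def \<rho>_def)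
qed

end

lemma donsker_varadhan_truncated_log_density_gt:
  assumes \<eta>: "real_distribution \<eta>" and \<kappa>: "real_distribution \<kappa>" and ac: "absolutely_continuous \<kappa> \<eta>"
    and c: "ereal c < KL \<eta> \<kappa>"
  shows "\<exists>N. c < donsker_varadhan (truncated_log_density \<eta> \<kappa> N) \<eta> \<kappa>"
proof -
  interpret E: real_distribution \<eta> by fact
  define \<rho> where "\<rho> = real_density \<eta> \<kappa>"
  define pos where "pos N = (\<integral>x. min (real N) (max 0 (ln (\<rho> x))) \<partial>\<eta>)" for N :: nat
  define neg where "neg = (\<integral>x. max 0 (- ln (\<rho> x)) \<partial>\<eta>)"
  have key: "pos N - neg - exp (- real N) \<le> donsker_varadhan (truncated_log_density \<eta> \<kappa> N) \<eta> \<kappa>" for N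
    using donsker_varadhan_truncated_log_density_ge[OF \<eta> \<kappa> ac, of N] by (simp add: pos_def neg_def \<rho>_def)
  have [measurable]: "\<rho> \<in> borel_measurable borel"
    using borel_measurable_real_density[OF \<eta> \<kappa> ac] by (simp add: \<rho>_def)
  have pos_int: "integrable \<eta> (\<lambda>x. min (real N) (max 0 (ln (\<rho> x))))" for N :: nat
    by (intro E.integrable_bounded_borel[where C = "real N"]) auto
  have "incseq pos"
    unfolding incseq_Suc_iff pos_def by (intro allI integral_mono pos_int) auto
  show ?thesis
  proof (cases "bdd_above (range pos)")
    case False
    then obtain N where "c + neg + 1 < pos N"
      by (auto simp: bdd_above_def not_le)
    moreover have "exp (- real N) \<le> 1" by simp
    ultimately show ?thesis using key[of N] by (intro exI[of _ N]) linarith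
  next
    case True
    define L where "L = (SUP N. pos N)"
    have pos_lim: "pos \<longlonglongrightarrow> L"
      unfolding L_def by (rule LIMSEQ_incseq_SUP[OF True \<open>incseq pos\<close>])
    have pos_part: "has_bochner_integral \<eta> (\<lambda>x. max 0 (ln (\<rho> x))) L"
    proof (rule has_bochner_integral_monotone_convergence[OF pos_int])
      show "AE x in \<eta>. incseq (\<lambda>N. min (real N) (max 0 (ln (\<rho> x))))"
        by (intro AE_I2) (auto simp: incseq_def intro: min.mono)
      show "AE x in \<eta>. (\<lambda>N. min (real N) (max 0 (ln (\<rho> x)))) \<longlonglongrightarrow> max 0 (ln (\<rho> x))"
      proof (intro AE_I2 tendsto_eventually)
        fix x
        obtain N :: nat where "max 0 (ln (\<rho> x)) \<le> real N" using real_arch_simple by blast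
        then show "\<forall>\<^sub>F n in sequentially. min (real n) (max 0 (ln (\<rho> x))) = max 0 (ln (\<rho> x))"
          unfolding eventually_sequentially by (intro exI[of _ N]) auto
      qed
      show "(\<lambda>N. \<integral>x. min (real N) (max 0 (ln (\<rho> x))) \<partial>\<eta>) \<longlonglongrightarrow> L"
        using pos_lim by (simp add: pos_def[abs_def])
    qed (intro E.borel_measurable_of_borel, measurable)
    have ln_split: "(\<lambda>x. ln (\<rho> x)) = (\<lambda>x. max 0 (ln (\<rho> x)) - max 0 (- ln (\<rho> x)))"
      by (auto simp: fun_eq_iff max_def)
    have neg_part: "integrable \<eta> (\<lambda>x. max 0 (- ln (\<rho> x)))"
      using integrable_neg_part_ln_real_density[OF \<eta> \<kappa> ac] by (simp add: \<rho>_def)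
    have "integrable \<eta> (\<lambda>x. ln (\<rho> x))"
      unfolding ln_split using pos_part neg_part by (simp add: has_bochner_integral_iff)
    moreover have "(\<integral>x. ln (\<rho> x) \<partial>\<eta>) = L - neg"
      unfolding ln_split using pos_part neg_part by (simp add: has_bochner_integral_iff neg_def)
    ultimately have "KL \<eta> \<kappa> = ereal (L - neg)"
      using ac by (simp add: KL_eq_real_density \<rho>_def)
    then have "c < L - neg"
      using c by simp
    moreover have "(\<lambda>N. exp (- real N)) \<longlonglongrightarrow> 0"
      by (rule filterlim_compose[OF exp_at_bot]) (simp add: filterlim_uminus_at_bot filterlim_real_sequentially)
    ultimately have "\<forall>\<^sub>F N in sequentially. c < pos N - neg - exp (- real N)"
      using pos_lim by (intro order_tendstoD(1)[where y = "L - neg - 0"] tendsto_intros) auto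
    then obtain N where "c < pos N - neg - exp (- real N)"
      unfolding eventually_sequentially by blast
    then show ?thesis using key[of N] by (intro exI[of _ N]) linarith
  qed
qed

lemma exists_donsker_varadhan_gt:
  assumes \<eta>: "real_distribution \<eta>" and \<kappa>: "real_distribution \<kappa>" and c: "ereal c < KL \<eta> \<kappa>"
  shows "\<exists>f C. f \<in> borel_measurable borel \<and> (\<forall>x. \<bar>f x\<bar> \<le> C) \<and> c < donsker_varadhan f \<eta> \<kappa>"
proof (cases "absolutely_continuous \<kappa> \<eta>")
  case True
  then obtain N where "c < donsker_varadhan (truncated_log_density \<eta> \<kappa> N) \<eta> \<kappa>"
    using donsker_varadhan_truncated_log_density_gt[OF \<eta> \<kappa> _ c] by blast
  then show ?thesis
    using borel_measurable_truncated_log_density[OF \<eta> \<kappa> True] abs_truncated_log_density_le[OF \<eta> \<kappa> True]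
    by blast
qed (rule donsker_varadhan_unbounded_if_not_absolutely_continuous[OF \<eta> \<kappa>])

lemma weak_conv_donsker_varadhan:
  assumes "\<And>n. real_distribution (\<eta>s n)" "real_distribution \<eta>" "weak_conv_m \<eta>s \<eta>"
    and "\<And>n. real_distribution (\<kappa>s n)" "real_distribution \<kappa>" "weak_conv_m \<kappa>s \<kappa>"
    and h: "\<And>x. isCont h x" "\<And>x. \<bar>h x\<bar> \<le> C"
  shows "(\<lambda>n. donsker_varadhan h (\<eta>s n) (\<kappa>s n)) \<longlonglongrightarrow> donsker_varadhan h \<eta> \<kappa>"
  unfolding donsker_varadhan_def
proof (intro tendsto_diff tendsto_ln)
  show "(\<lambda>n. \<integral>x. h x \<partial>\<eta>s n) \<longlonglongrightarrow> (\<integral>x. h x \<partial>\<eta>)"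
    using assms by (intro weak_conv_imp_integral_bdd_continuous_conv[where B = C]) auto
  show "(\<lambda>n. \<integral>x. exp (h x) \<partial>\<kappa>s n) \<longlonglongrightarrow> (\<integral>x. exp (h x) \<partial>\<kappa>)"
    using assms by (intro weak_conv_imp_integral_bdd_continuous_conv[where B = "exp C"])
      (auto intro: continuous_intros simp: abs_le_iff)
  show "(\<integral>x. exp (h x) \<partial>\<kappa>) \<noteq> 0"
    using real_distribution.integral_exp_bounded_pos[OF assms(5) borel_measurable_isCont[OF h(1)] h(2)] by simp
qed

lemma KL_le_of_weak_conv:
  assumes \<eta>s: "\<And>n. real_distribution (\<eta>s n)" and \<eta>: "real_distribution \<eta>" and "weak_conv_m \<eta>s \<eta>"
    and \<kappa>s: "\<And>n. real_distribution (\<kappa>s n)" and \<kappa>: "real_distribution \<kappa>" and "weak_conv_m \<kappa>s \<kappa>"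
    and le: "\<And>n. KL (\<eta>s n) (\<kappa>s n) \<le> ereal c"
  shows "KL \<eta> \<kappa> \<le> ereal c"
proof (rule ccontr)
  assume "\<not> KL \<eta> \<kappa> \<le> ereal c"
  then have "ereal c < KL \<eta> \<kappa>" by simp
  then obtain f C where f: "f \<in> borel_measurable borel" "\<And>x. \<bar>f x\<bar> \<le> C" "c < donsker_varadhan f \<eta> \<kappa>"
    using exists_donsker_varadhan_gt[OF \<eta> \<kappa>] by blast
  define \<delta> where "\<delta> = (donsker_varadhan f \<eta> \<kappa> - c) / (1 + exp (2 * C))"
  have "0 < \<delta>" using f(3) by (simp add: \<delta>_def add_pos_pos)
  obtain h where h: "\<And>x. isCont h x" "\<And>x. \<bar>h x\<bar> \<le> C"
    "\<And>\<mu>. \<mu> \<in> {\<eta>, \<kappa>} \<Longrightarrow> (\<integral>x. \<bar>f x - h x\<bar> \<partial>\<mu>) < \<delta>"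
    using exists_continuous_L1_approx[of "{\<eta>, \<kappa>}" f C \<delta>] \<eta> \<kappa> f(1,2) \<open>0 < \<delta>\<close> by auto
  have "donsker_varadhan f \<eta> \<kappa> - donsker_varadhan h \<eta> \<kappa>
      \<le> (\<integral>x. \<bar>f x - h x\<bar> \<partial>\<eta>) + exp (2 * C) * (\<integral>x. \<bar>f x - h x\<bar> \<partial>\<kappa>)"
    by (rule donsker_varadhan_diff_le[OF \<eta> \<kappa> f(1,2) borel_measurable_isCont[OF h(1)] h(2)])
  also have "\<dots> < \<delta> + exp (2 * C) * \<delta>"
    using h(3)[of \<eta>] h(3)[of \<kappa>] by (intro add_less_le_mono mult_left_mono) simp_all
  also have "\<dots> = donsker_varadhan f \<eta> \<kappa> - c"
  proof -
    have "1 + exp (2 * C) \<noteq> 0" using exp_gt_zero[of "2 * C"] by linarith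
    then have "(1 + exp (2 * C)) * \<delta> = donsker_varadhan f \<eta> \<kappa> - c"
      unfolding \<delta>_def by simp
    then show ?thesis by (simp add: algebra_simps)
  qed
  finally have "c < donsker_varadhan h \<eta> \<kappa>" by simp
  moreover have "(\<lambda>n. donsker_varadhan h (\<eta>s n) (\<kappa>s n)) \<longlonglongrightarrow> donsker_varadhan h \<eta> \<kappa>"
    using assms h(1,2) by (intro weak_conv_donsker_varadhan)
  ultimately have "\<forall>\<^sub>F n in sequentially. c < donsker_varadhan h (\<eta>s n) (\<kappa>s n)"
    by (rule order_tendstoD(1)[rotated])
  then obtain n where "c < donsker_varadhan h (\<eta>s n) (\<kappa>s n)"
    unfolding eventually_sequentially by blast
  moreover have "ereal (donsker_varadhan h (\<eta>s n) (\<kappa>s n)) \<le> ereal c"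
    using donsker_varadhan_le_KL[OF \<eta>s \<kappa>s borel_measurable_isCont[OF h(1)] h(2)] le order_trans by blast
  ultimately show False by simp
qed

subsection \<open>Lower semicontinuity of the constrained infima\<close>

lemma Inf_KL_moment_class_lsc:
  fixes R :: "real \<Rightarrow> real \<Rightarrow> bool"
  assumes eps: "0 \<le> eps" and B: "0 \<le> B"
    and closed: "\<And>\<kappa>s \<kappa> ws w. (\<And>n. \<kappa>s n \<in> moment_class eps B) \<Longrightarrow> \<kappa> \<in> moment_class eps B \<Longrightarrow>
        weak_conv_m \<kappa>s \<kappa> \<Longrightarrow> ws \<longlonglongrightarrow> w \<Longrightarrow> (\<And>n. R (cvar p (\<kappa>s n)) (ws n)) \<Longrightarrow> R (cvar p \<kappa>) w"
    and \<eta>s: "\<And>n. real_distribution (\<eta>s n)" and \<eta>: "real_distribution \<eta>" and \<eta>_conv: "weak_conv_m \<eta>s \<eta>"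
    and v: "vs \<longlonglongrightarrow> v"
  shows "Inf {KL \<eta> \<kappa> | \<kappa>. \<kappa> \<in> moment_class eps B \<and> R (cvar p \<kappa>) v}
    \<le> liminf (\<lambda>n. Inf {KL (\<eta>s n) \<kappa> | \<kappa>. \<kappa> \<in> moment_class eps B \<and> R (cvar p \<kappa>) (vs n)})"
    (is "Inf (?S \<eta> v) \<le> liminf (\<lambda>n. Inf (?S (\<eta>s n) (vs n)))")
proof (rule ccontr)
  assume "\<not> ?thesis"
  then have "liminf (\<lambda>n. Inf (?S (\<eta>s n) (vs n))) < Inf (?S \<eta> v)" by simp
  then obtain c where c: "liminf (\<lambda>n. Inf (?S (\<eta>s n) (vs n))) < ereal c" "ereal c < Inf (?S \<eta> v)"
    using ereal_dense2 by blast
  define J where "J = {n. Inf (?S (\<eta>s n) (vs n)) < ereal c}"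
  have "infinite J"
    using liminf_upper_bound[OF c(1)] unfolding J_def infinite_nat_iff_unbounded by blast
  define s where "s = enumerate J"
  have s: "strict_mono s" "\<And>k. Inf (?S (\<eta>s (s k)) (vs (s k))) < ereal c"
    using strict_mono_enumerate[OF \<open>infinite J\<close>] enumerate_in_set[OF \<open>infinite J\<close>]
    by (auto simp: s_def J_def)
  have "\<exists>\<kappa>. \<kappa> \<in> moment_class eps B \<and> R (cvar p \<kappa>) (vs (s k)) \<and> KL (\<eta>s (s k)) \<kappa> < ereal c" for k
  proof -
    obtain x where "x \<in> ?S (\<eta>s (s k)) (vs (s k))" "x < ereal c"
      using s(2)[of k] unfolding Inf_less_iff ..
    then show ?thesis by blast
  qed
  then obtain \<kappa>s where "\<forall>k. \<kappa>s k \<in> moment_class eps B \<and> R (cvar p (\<kappa>s k)) (vs (s k)) \<and> KL (\<eta>s (s k)) (\<kappa>s k) < ereal c"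
    using choice[of "\<lambda>k \<kappa>. \<kappa> \<in> moment_class eps B \<and> R (cvar p \<kappa>) (vs (s k)) \<and> KL (\<eta>s (s k)) \<kappa> < ereal c"]
    by blast
  then have \<kappa>s: "\<And>k. \<kappa>s k \<in> moment_class eps B" "\<And>k. R (cvar p (\<kappa>s k)) (vs (s k))"
    "\<And>k. KL (\<eta>s (s k)) (\<kappa>s k) < ereal c"
    by simp_all
  have "\<exists>r \<kappa>. strict_mono r \<and> real_distribution \<kappa> \<and> weak_conv_m (\<kappa>s \<circ> id \<circ> r) \<kappa>"
    by (rule tight_imp_convergent_subsubsequence[OF tight_moment_class[OF eps B \<kappa>s(1)]])
      (simp add: strict_mono_def)
  then obtain r \<kappa> where r: "strict_mono r" "real_distribution \<kappa>" "weak_conv_m (\<kappa>s \<circ> r) \<kappa>"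
    by auto
  have \<kappa>: "\<kappa> \<in> moment_class eps B"
    using moment_class_weak_limit[OF eps B _ r(2,3)] \<kappa>s(1) by simp
  have "R (cvar p \<kappa>) v"
    using closed[OF _ \<kappa> r(3) LIMSEQ_subseq_LIMSEQ[OF v strict_mono_o[OF s(1) r(1)]]] \<kappa>s(1,2)
    by (simp add: comp_def)
  moreover have "KL \<eta> \<kappa> \<le> ereal c"
  proof (rule KL_le_of_weak_conv[OF _ \<eta> _ _ r(2,3)])
    show "weak_conv_m (\<eta>s \<circ> (s \<circ> r)) \<eta>"
      by (rule weak_conv_m_subseq[OF \<eta>_conv strict_mono_o[OF s(1) r(1)]])
    show "KL ((\<eta>s \<circ> (s \<circ> r)) n) ((\<kappa>s \<circ> r) n) \<le> ereal c" for n
      using \<kappa>s(3)[of "r n"] by simp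
  qed (use \<eta>s moment_class_real_distribution[OF \<kappa>s(1)] in auto)
  ultimately have "Inf (?S \<eta> v) \<le> ereal c"
    using \<kappa> by (intro Inf_lower2[of "KL \<eta> \<kappa>"]) auto
  with c(2) show False by simp
qed

theorem lemma8:
  fixes p eps B :: real
  assumes "0 < p" "p < 1" "eps > 0" "B > 0"
  shows "\<forall>(\<eta>s :: nat \<Rightarrow> real measure) \<eta> (vs :: nat \<Rightarrow> real) v.
           (\<forall>n. \<eta>s n \<in> probs_R) \<longrightarrow> \<eta> \<in> probs_R \<longrightarrow>
           (\<forall>n. vs n \<in> dom_D p eps B) \<longrightarrow> v \<in> dom_D p eps B \<longrightarrow>
           weak_conv_m \<eta>s \<eta> \<longrightarrow> vs \<longlonglongrightarrow> v \<longrightarrow>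
           KL_inf_U p eps B \<eta> v \<le> liminf (\<lambda>n. KL_inf_U p eps B (\<eta>s n) (vs n)) \<and>
           KL_inf_L p eps B \<eta> v \<le> liminf (\<lambda>n. KL_inf_L p eps B (\<eta>s n) (vs n))"
proof (intro allI impI conjI)
  fix \<eta>s :: "nat \<Rightarrow> real measure" and \<eta> and vs :: "nat \<Rightarrow> real" and v :: real
  assume \<eta>s: "\<forall>n. \<eta>s n \<in> probs_R" and \<eta>: "\<eta> \<in> probs_R"
    and conv: "weak_conv_m \<eta>s \<eta>" and v: "vs \<longlonglongrightarrow> v"
  have eps: "0 \<le> eps" "0 < eps" and B: "0 \<le> B" and p: "0 < p" "p < 1"
    using assms by auto
  note lsc = Inf_KL_moment_class_lsc[OF eps(1) B _ _ _ conv v]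
  show "KL_inf_U p eps B \<eta> v \<le> liminf (\<lambda>n. KL_inf_U p eps B (\<eta>s n) (vs n))"
    unfolding KL_inf_U_def
    using lsc[where R = "\<lambda>c w. w \<le> c"] cvar_ge_of_weak_conv[OF eps(1) B eps(2) p] \<eta>s \<eta>
    by (auto simp: probs_R_iff_real_distribution)
  show "KL_inf_L p eps B \<eta> v \<le> liminf (\<lambda>n. KL_inf_L p eps B (\<eta>s n) (vs n))"
    unfolding KL_inf_L_def
    using lsc[where R = "\<lambda>c w. c \<le> w"] cvar_le_of_weak_conv[OF eps(1) B eps(2) p] \<eta>s \<eta>
    by (auto simp: probs_R_iff_real_distribution)
qed

end
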